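(* Fix integers $\nu\ge 2$, $p\ge1$, $H\ge1$, $\sigma>0$, $T>0$, and consider either the asymmetric or the symmetric CP-decomposition model below, trained by gradient flow from an i.i.d. $\mathcal N(0,\sigma^2)$ initialization. Suppose that the target tensor entries $F_{i_1,\ldots,i_\nu}$ can be written as a polynomial (with numerical coefficients) in $H$, $p$, the indices $i_1,\ldots,i_\nu$, and Kronecker deltas $\delta_{i_a=i_b}$ for $a,b\in\{1,\ldots,\nu\}$. Then, for every integer $s\ge 0$, the quantity $T^s\,\mathbb E\big[\tfrac{d^s L}{dt^s}(0)\big]$ is a polynomial in $H$, $p$ and $\sigma^2$.
   Context: Model: for $i_1,\ldots,i_\nu\in\{1,\ldots,p\}$, $f_{i_1,\ldots,i_\nu}=\sum_{k=1}^H\prod_{m=1}^\nu u^{(m)}_{k,i_m}$, with learnable parameters $\mathbf u=(u^{(m)}_{k,i})\in\mathbb R^{H\times p\times\nu}$. In the asymmetric scenario (ASYM) no constraint is imposed; in the symmetric scenario (SYM) the target $F$ is a symmetric tensor and $u^{(1)}_{k,i}=\cdots=u^{(\nu)}_{k,i}=:u_{k,i}$, the free parameters being $u_{k,i}$. Loss: $L(\mathbf u)=\frac12\sum_{i_1,\ldots,i_\nu=1}^p(f_{i_1,\ldots,i_\nu}-F_{i_1,\ldots,i_\nu})^2$. Gradient flow: $\frac{d\mathbf u}{dt}=-\frac1T\partial_{\mathbf u}L(\mathbf u)$, so $\frac{d^sL}{dt^s}(0)$ is a polynomial in the initial weights. Initialization: all free weights at $t=0$ are i.i.d. $\mathcal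 N(0,\sigma^2)$; the expectation is over this initialization. *)

theory Defs
  imports "HOL-Probability.Probability" "HOL-Library.Poly_Mapping"
begin

definition mono_eval :: "('v \<Rightarrow> real) \<Rightarrow> ('v \<Rightarrow>\<^sub>0 nat) \<Rightarrow> real" where
  "mono_eval val m = (\<Prod>v\<in>Poly_Mapping.keys m. val v ^ Poly_Mapping.lookup m v)"

definition poly_eval :: "('v \<Rightarrow> real) \<Rightarrow> (('v \<Rightarrow>\<^sub>0 nat) \<Rightarrow>\<^sub>0 real) \<Rightarrow> real" where
  "poly_eval val P = (\<Sum>m\<in>Poly_Mapping.keys P. Poly_Mapping.lookup P m * mono_eval val m)"

datatype fvar = VarH | Varp | Vari nat | Vdelta nat nat

definition fvar_ok :: "nat \<Rightarrow> fvar \<Rightarrow> bool" where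
  "fvar_ok \<nu> v = (case v of Vari m \<Rightarrow> m \<in> {1..\<nu>}
                     | Vdelta a b \<Rightarrow> a \<in> {1..\<nu>} \<and> b \<in> {1..\<nu>}
                     | _ \<Rightarrow> True)"

definition target_val :: "nat \<Rightarrow> nat \<Rightarrow> (nat \<Rightarrow> nat) \<Rightarrow> fvar \<Rightarrow> real" where
  "target_val H p idx v = (case v of VarH \<Rightarrow> real H | Varp \<Rightarrow> real p
                          | Vari m \<Rightarrow> real (idx m)
                          | Vdelta a b \<Rightarrow> (if idx a = idx b then 1 else 0))"

datatype pvar = PH | Pp | Psigma2

definition pvar_val :: "nat \<Rightarrow> nat \<Rightarrow> real \<Rightarrow> pvar \<Rightarrow> real" where
  "pvar_val H p \<sigma> v = (case v of PH \<Rightarrow> real H | Pp \<Rightarrow> real p | Psigma2 \<Rightarrow> \<sigma>\<^sup>2)"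

datatype scenario = ASYM | SYM

definition tuples :: "nat \<Rightarrow> nat \<Rightarrow> (nat \<Rightarrow> nat) set" where
  "tuples \<nu> p = PiE {1..\<nu>} (\<lambda>_. {1..p})"

(* free parameters: u^{(m)}_{k,i} indexed by (k,i,m); in SYM only m = 1 is used *)
definition params :: "scenario \<Rightarrow> nat \<Rightarrow> nat \<Rightarrow> nat \<Rightarrow> (nat \<times> nat \<times> nat) set" where
  "params sc H p \<nu> = {1..H} \<times> {1..p} \<times> (case sc of ASYM \<Rightarrow> {1..\<nu>} | SYM \<Rightarrow> {1})"

definition weight :: "scenario \<Rightarrow> (nat \<times> nat \<times> nat \<Rightarrow> real) \<Rightarrow> nat \<Rightarrow> nat \<Rightarrow> nat \<Rightarrow> real" where
  "weight sc w k i m = w (k, i, case sc of ASYM \<Rightarrow> m | SYM \<Rightarrow> 1)"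

definition model :: "scenario \<Rightarrow> nat \<Rightarrow> nat \<Rightarrow> (nat \<times> nat \<times> nat \<Rightarrow> real) \<Rightarrow> (nat \<Rightarrow> nat) \<Rightarrow> real" where
  "model sc H \<nu> w idx = (\<Sum>k=1..H. \<Prod>m=1..\<nu>. weight sc w k (idx m) m)"

definition target :: "((fvar \<Rightarrow>\<^sub>0 nat) \<Rightarrow>\<^sub>0 real) \<Rightarrow> nat \<Rightarrow> nat \<Rightarrow> (nat \<Rightarrow> nat) \<Rightarrow> real" where
  "target Q H p idx = poly_eval (target_val H p idx) Q"

definition loss :: "scenario \<Rightarrow> nat \<Rightarrow> nat \<Rightarrow> nat \<Rightarrow> ((fvar \<Rightarrow>\<^sub>0 nat) \<Rightarrow>\<^sub>0 real)
                    \<Rightarrow> (nat \<times> nat \<times> nat \<Rightarrow> real) \<Rightarrow> real" where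
  "loss sc H p \<nu> Q w = 1/2 * (\<Sum>idx\<in>tuples \<nu> p. (model sc H \<nu> w idx - target Q H p idx)\<^sup>2)"

definition sym_tensor :: "nat \<Rightarrow> nat \<Rightarrow> ((nat \<Rightarrow> nat) \<Rightarrow> real) \<Rightarrow> bool" where
  "sym_tensor \<nu> p F = (\<forall>idx\<in>tuples \<nu> p. \<forall>\<pi>. \<pi> permutes {1..\<nu>} \<longrightarrow> F (idx \<circ> \<pi>) = F idx)"

definition partial :: "(('j \<Rightarrow> real) \<Rightarrow> real) \<Rightarrow> ('j \<Rightarrow> real) \<Rightarrow> 'j \<Rightarrow> real" where
  "partial f w j = deriv (\<lambda>x. f (w(j := x))) (w j)"

definition gradient_flow :: "scenario \<Rightarrow> nat \<Rightarrow> nat \<Rightarrow> nat \<Rightarrow> ((fvar \<Rightarrow>\<^sub>0 nat) \<Rightarrow>\<^sub>0 real) \<Rightarrow> real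
     \<Rightarrow> ((nat \<times> nat \<times> nat \<Rightarrow> real) \<Rightarrow> real \<Rightarrow> (nat \<times> nat \<times> nat \<Rightarrow> real)) \<Rightarrow> bool" where
  "gradient_flow sc H p \<nu> Q T \<phi> =
     (\<forall>w. \<phi> w 0 = w \<and>
        (\<exists>\<epsilon>>0. \<forall>t\<in>{-\<epsilon><..<\<epsilon>}. \<forall>j\<in>params sc H p \<nu>.
           ((\<lambda>\<tau>. \<phi> w \<tau> j) has_real_derivative
              (- (1 / T) * partial (loss sc H p \<nu> Q) (\<phi> w t) j)) (at t)))"

definition init_measure :: "scenario \<Rightarrow> nat \<Rightarrow> nat \<Rightarrow> nat \<Rightarrow> real \<Rightarrow> (nat \<times> nat \<times> nat \<Rightarrow> real) measure" where
  "init_measure sc H p \<nu> \<sigma> = PiM (params sc H p \<nu>) (\<lambda>_. density lborel (normal_density 0 \<sigma>))"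

end

(*
  Along the gradient flow, T^s d^s L/dt^s = E_s(u(t)) for a "weight polynomial" E_s: a polynomial
  in the weights u^(m)_(k,i) whose coefficients are polynomials in H, p, the values of the indices
  and Kronecker deltas between them, with sums over bound indices k in {1..H} and i in {1..p}.
  The loss is of this form, and the class is closed under products and partial derivatives,
  hence under the pairing -sum_j (dE/du_j)(dL/du_j) that the chain rule produces.

  Under the Gaussian initialization, Isserlis' recursion E[u_j M] = sigma^2 sum_r delta_r E[M_r]
  turns the expectation of a weight polynomial into an "index polynomial" in H, p, sigma^2, index
  values and deltas.  Summing an index polynomial over a bound index gives again one: a monomial
  either contains a delta tying the summed index to another index, which collapses the sum, or
  depends on it only through a power x^n, and sum_(x=1..N) x^n is a polynomial in N.  Once every
  index is summed out, what remains is a polynomial in H, p and sigma^2.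
*)

theory Submission
  imports Defs
begin

lemma poly_eval_superset:
  assumes "finite S" "Poly_Mapping.keys P \<subseteq> S"
  shows "poly_eval val P = (\<Sum>m\<in>S. Poly_Mapping.lookup P m * mono_eval val m)"
  unfolding poly_eval_def
  by (rule sum.mono_neutral_left) (use assms in \<open>auto simp: in_keys_iff\<close>)

lemma mono_eval_superset:
  assumes "finite S" "Poly_Mapping.keys m \<subseteq> S"
  shows "mono_eval val m = (\<Prod>v\<in>S. val v ^ Poly_Mapping.lookup m v)"
  unfolding mono_eval_def
  by (rule prod.mono_neutral_left) (use assms in \<open>auto simp: in_keys_iff\<close>)

lemma mono_eval_add: "mono_eval val (m + n) = mono_eval val m * mono_eval val n"
proof -
  let ?S = "Poly_Mapping.keys m \<union> Poly_Mapping.keys n"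
  have "mono_eval val (m + n) = (\<Prod>v\<in>?S. val v ^ Poly_Mapping.lookup (m + n) v)"
    by (rule mono_eval_superset) (auto dest: keys_add[THEN subsetD])
  also have "\<dots> = (\<Prod>v\<in>?S. val v ^ Poly_Mapping.lookup m v) * (\<Prod>v\<in>?S. val v ^ Poly_Mapping.lookup n v)"
    by (simp add: lookup_add power_add prod.distrib)
  also have "\<dots> = mono_eval val m * mono_eval val n"
    by (subst (1 2) mono_eval_superset[of ?S]) auto
  finally show ?thesis .
qed

lemma poly_eval_add: "poly_eval val (P + Q) = poly_eval val P + poly_eval val Q"
proof -
  let ?S = "Poly_Mapping.keys P \<union> Poly_Mapping.keys Q"
  have "poly_eval val (P + Q) = (\<Sum>m\<in>?S. Poly_Mapping.lookup (P + Q) m * mono_eval val m)"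
    by (rule poly_eval_superset) (auto dest: keys_add[THEN subsetD])
  also have "\<dots> = (\<Sum>m\<in>?S. Poly_Mapping.lookup P m * mono_eval val m) + (\<Sum>m\<in>?S. Poly_Mapping.lookup Q m * mono_eval val m)"
    by (simp add: lookup_add distrib_right sum.distrib)
  also have "\<dots> = poly_eval val P + poly_eval val Q"
    by (subst (1 2) poly_eval_superset[of ?S]) auto
  finally show ?thesis .
qed

lemma poly_eval_sum: "poly_eval val (\<Sum>i\<in>A. P i) = (\<Sum>i\<in>A. poly_eval val (P i))"
  by (induction A rule: infinite_finite_induct) (simp_all add: poly_eval_add poly_eval_def[of val 0])

lemma poly_eval_single: "poly_eval val (Poly_Mapping.single m c) = c * mono_eval val m"
  by (simp add: poly_eval_def)

lemma poly_mapping_sum_single: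
  "P = (\<Sum>m\<in>Poly_Mapping.keys P. Poly_Mapping.single m (Poly_Mapping.lookup P m))"
  by (rule poly_mapping_eqI) (simp add: lookup_sum lookup_single when_def in_keys_iff)

lemma poly_eval_mult: "poly_eval val (P * Q) = poly_eval val P * poly_eval val Q"
proof -
  let ?a = "Poly_Mapping.lookup P" and ?b = "Poly_Mapping.lookup Q"
  have "P * Q = (\<Sum>m\<in>Poly_Mapping.keys P. \<Sum>n\<in>Poly_Mapping.keys Q. Poly_Mapping.single (m + n) (?a m * ?b n))"
    by (subst (1 2) poly_mapping_sum_single) (simp add: sum_product mult_single)
  then have "poly_eval val (P * Q) = (\<Sum>m\<in>Poly_Mapping.keys P. \<Sum>n\<in>Poly_Mapping.keys Q.
      ?a m * mono_eval val m * (?b n * mono_eval val n))"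
    by (simp add: poly_eval_sum poly_eval_single mono_eval_add ac_simps)
  then show ?thesis
    by (simp add: poly_eval_def sum_product)
qed

definition pvar_polynomial :: "(nat \<Rightarrow> nat \<Rightarrow> real \<Rightarrow> real) \<Rightarrow> bool" where
  "pvar_polynomial f \<longleftrightarrow> (\<exists>P. \<forall>H p \<sigma>. f H p \<sigma> = poly_eval (pvar_val H p \<sigma>) P)"

lemma pvar_polynomial_const: "pvar_polynomial (\<lambda>H p \<sigma>. c)"
  unfolding pvar_polynomial_def
  by (intro exI[of _ "Poly_Mapping.single 0 c"]) (simp add: poly_eval_single mono_eval_def)

lemma pvar_polynomial_var: "pvar_polynomial (\<lambda>H p \<sigma>. pvar_val H p \<sigma> v)"
  unfolding pvar_polynomial_def
  by (intro exI[of _ "Poly_Mapping.single (Poly_Mapping.single v 1) 1"]) (simp add: poly_eval_single mono_eval_def)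

lemma pvar_polynomial_add:
  "pvar_polynomial f \<Longrightarrow> pvar_polynomial g \<Longrightarrow> pvar_polynomial (\<lambda>H p \<sigma>. f H p \<sigma> + g H p \<sigma>)"
  unfolding pvar_polynomial_def by (metis poly_eval_add)

lemma pvar_polynomial_mult:
  "pvar_polynomial f \<Longrightarrow> pvar_polynomial g \<Longrightarrow> pvar_polynomial (\<lambda>H p \<sigma>. f H p \<sigma> * g H p \<sigma>)"
  unfolding pvar_polynomial_def by (metis poly_eval_mult)

section \<open>Index polynomials\<close>

datatype index_kind = Rank | Coord

(* e \<kappa> i is the value of the i-th innermost bound index of kind \<kappa> (de Bruijn numbering);
   Rank indices range over the components 1..H, Coord indices over the coordinates 1..p. *)
type_synonym env = "index_kind \<Rightarrow> nat \<Rightarrow> nat"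

definition index_bound :: "nat \<Rightarrow> nat \<Rightarrow> index_kind \<Rightarrow> nat" where
  "index_bound H p \<kappa> = (case \<kappa> of Rank \<Rightarrow> H | Coord \<Rightarrow> p)"

definition valid_env :: "nat \<Rightarrow> nat \<Rightarrow> env \<Rightarrow> bool" where
  "valid_env H p e \<longleftrightarrow> (\<forall>\<kappa> i. e \<kappa> i \<in> {1..index_bound H p \<kappa>})"

definition push_env :: "index_kind \<Rightarrow> nat \<Rightarrow> env \<Rightarrow> env" where
  "push_env \<kappa> x e = e(\<kappa> := case_nat x (e \<kappa>))"

definition reindex_env :: "(index_kind \<Rightarrow> nat \<Rightarrow> nat) \<Rightarrow> env \<Rightarrow> env" where
  "reindex_env r e = (\<lambda>\<kappa>. e \<kappa> \<circ> r \<kappa>)"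

lemma valid_env_push: "valid_env H p e \<Longrightarrow> x \<in> {1..index_bound H p \<kappa>} \<Longrightarrow> valid_env H p (push_env \<kappa> x e)"
  unfolding valid_env_def push_env_def by (auto split: nat.split)

lemma push_env_head [simp]: "push_env \<kappa> x e \<kappa> 0 = x"
  by (simp add: push_env_def)

lemma push_env_tail:
  "(\<kappa>', i) \<noteq> (\<kappa>, 0) \<Longrightarrow> push_env \<kappa> x e \<kappa>' i = e \<kappa>' (if \<kappa>' = \<kappa> then i - 1 else i)"
  by (cases i) (auto simp: push_env_def)

lemma push_env_existing: "push_env \<kappa> (e \<kappa> v) e = reindex_env ((\<lambda>_. id)(\<kappa> := case_nat v id)) e"
  by (auto simp: push_env_def reindex_env_def fun_eq_iff split: nat.split)

lemma push_env_reindex: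
  "push_env \<kappa> x (reindex_env r e) = reindex_env (r(\<kappa> := case_nat 0 (Suc \<circ> r \<kappa>))) (push_env \<kappa> x e)"
  by (auto simp: push_env_def reindex_env_def fun_eq_iff split: nat.split)

lemma reindex_pop_push: "reindex_env ((\<lambda>_. id)(\<kappa> := Suc)) (push_env \<kappa> x e) = e"
  by (auto simp: push_env_def reindex_env_def fun_eq_iff)

type_synonym coeff = "nat \<Rightarrow> nat \<Rightarrow> real \<Rightarrow> env \<Rightarrow> real"

inductive index_poly :: "coeff \<Rightarrow> bool" where
  const: "index_poly (\<lambda>H p \<sigma> e. c)"
| rank_bound: "index_poly (\<lambda>H p \<sigma> e. real H)"
| coord_bound: "index_poly (\<lambda>H p \<sigma> e. real p)"
| variance: "index_poly (\<lambda>H p \<sigma> e. \<sigma>\<^sup>2)"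
| index_value: "index_poly (\<lambda>H p \<sigma> e. real (e \<kappa> i))"
| index_eq: "index_poly (\<lambda>H p \<sigma> e. if e \<kappa> i = e \<kappa> j then 1 else 0)"
| add: "index_poly f \<Longrightarrow> index_poly g \<Longrightarrow> index_poly (\<lambda>H p \<sigma> e. f H p \<sigma> e + g H p \<sigma> e)"
| mult: "index_poly f \<Longrightarrow> index_poly g \<Longrightarrow> index_poly (\<lambda>H p \<sigma> e. f H p \<sigma> e * g H p \<sigma> e)"

inductive index_monomial :: "coeff \<Rightarrow> bool" where
  const: "index_monomial (\<lambda>H p \<sigma> e. c)"
| rank_bound: "index_monomial (\<lambda>H p \<sigma> e. real H)"
| coord_bound: "index_monomial (\<lambda>H p \<sigma> e. real p)"
| variance: "index_monomial (\<lambda>H p \<sigma> e. \<sigma>\<^sup>2)"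
| index_value: "index_monomial (\<lambda>H p \<sigma> e. real (e \<kappa> i))"
| index_eq: "index_monomial (\<lambda>H p \<sigma> e. if e \<kappa> i = e \<kappa> j then 1 else 0)"
| mult: "index_monomial f \<Longrightarrow> index_monomial g \<Longrightarrow> index_monomial (\<lambda>H p \<sigma> e. f H p \<sigma> e * g H p \<sigma> e)"

inductive index_monomial_sum :: "coeff \<Rightarrow> bool" where
  zero: "index_monomial_sum (\<lambda>H p \<sigma> e. 0)"
| add: "index_monomial m \<Longrightarrow> index_monomial_sum f \<Longrightarrow> index_monomial_sum (\<lambda>H p \<sigma> e. m H p \<sigma> e + f H p \<sigma> e)"

lemma index_poly_if_monomial: "index_monomial m \<Longrightarrow> index_poly m"
  by (induction rule: index_monomial.induct) (auto intro: index_poly.intros)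

lemma index_monomial_sum_add:
  "index_monomial_sum f \<Longrightarrow> index_monomial_sum g \<Longrightarrow> index_monomial_sum (\<lambda>H p \<sigma> e. f H p \<sigma> e + g H p \<sigma> e)"
proof (induction rule: index_monomial_sum.induct)
  case (add m f)
  then show ?case
    using index_monomial_sum.add[OF add.hyps(1) add.IH[OF add.prems]] by (simp add: add.assoc)
qed simp

lemma index_monomial_sum_mult_monomial:
  "index_monomial_sum g \<Longrightarrow> index_monomial m \<Longrightarrow> index_monomial_sum (\<lambda>H p \<sigma> e. m H p \<sigma> e * g H p \<sigma> e)"
proof (induction rule: index_monomial_sum.induct)
  case zero
  then show ?case by (simp add: index_monomial_sum.zero)
next
  case (add m' f)
  then show ?case
    using index_monomial_sum.add[OF index_monomial.mult[OF add.prems add.hyps(1)] add.IH[OF add.prems]]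
    by (simp add: distrib_left)
qed

lemma index_monomial_sum_mult:
  "index_monomial_sum f \<Longrightarrow> index_monomial_sum g \<Longrightarrow> index_monomial_sum (\<lambda>H p \<sigma> e. f H p \<sigma> e * g H p \<sigma> e)"
proof (induction rule: index_monomial_sum.induct)
  case zero
  then show ?case by (simp add: index_monomial_sum.zero)
next
  case (add m f)
  then show ?case
    using index_monomial_sum_add[OF index_monomial_sum_mult_monomial[OF add.prems add.hyps(1)] add.IH[OF add.prems]]
    by (simp add: distrib_right)
qed

lemma index_monomial_sum_if_poly: "index_poly f \<Longrightarrow> index_monomial_sum f"
proof (induction rule: index_poly.induct)
  case add
  show ?case by (rule index_monomial_sum_add[OF add.IH])
next
  case mult
  show ?case by (rule index_monomial_sum_mult[OF mult.IH])
qed (auto intro!: index_monomial_sum.add[of _ "\<lambda>H p \<sigma> e. 0", simplified] index_monomial.intros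
          index_monomial_sum.zero)

lemma index_poly_reindex: "index_poly f \<Longrightarrow> index_poly (\<lambda>H p \<sigma> e. f H p \<sigma> (reindex_env r e))"
  by (induction rule: index_poly.induct) (auto simp: reindex_env_def intro: index_poly.intros)

lemma index_poly_sum:
  "(\<And>a. a \<in> A \<Longrightarrow> index_poly (f a)) \<Longrightarrow> index_poly (\<lambda>H p \<sigma> e. \<Sum>a\<in>A. f a H p \<sigma> e)"
  by (induction A rule: infinite_finite_induct) (auto intro: index_poly.intros)

lemma index_poly_prod:
  "(\<And>a. a \<in> A \<Longrightarrow> index_poly (f a)) \<Longrightarrow> index_poly (\<lambda>H p \<sigma> e. \<Prod>a\<in>A. f a H p \<sigma> e)"
  by (induction A rule: infinite_finite_induct) (auto intro: index_poly.intros)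

lemma index_poly_power: "index_poly f \<Longrightarrow> index_poly (\<lambda>H p \<sigma> e. f H p \<sigma> e ^ n)"
  by (induction n) (auto intro: index_poly.intros)

lemma index_poly_index_bound: "index_poly (\<lambda>H p \<sigma> e. real (index_bound H p \<kappa>))"
  by (cases \<kappa>) (simp_all add: index_bound_def index_poly.rank_bound index_poly.coord_bound)

lemma sum_of_powers_recurrence:
  "real (n + 1) * (\<Sum>x=1..N. real x ^ n) =
     (real N + 1) ^ (n + 1) - 1 - (\<Sum>j<n. real (Suc n choose j) * (\<Sum>x=1..N. real x ^ j))"
proof -
  have step: "(y + 1) ^ (n + 1) - y ^ (n + 1) = (\<Sum>j<Suc n. real (Suc n choose j) * y ^ j)" for y :: real
    using binomial_ring[of y 1 "Suc n"] by (simp del: sum.lessThan_Suc add: lessThan_Suc_atMost)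
  have "(real N + 1) ^ (n + 1) - 1 = (\<Sum>x=1..N. (real x + 1) ^ (n + 1) - real x ^ (n + 1))"
    using sum_Suc_diff[of 1 N "\<lambda>x. real x ^ (n + 1)"] by (simp add: add.commute)
  also have "\<dots> = (\<Sum>x=1..N. \<Sum>j<Suc n. real (Suc n choose j) * real x ^ j)"
    by (simp only: step)
  also have "\<dots> = (\<Sum>j<Suc n. real (Suc n choose j) * (\<Sum>x=1..N. real x ^ j))"
    by (subst sum.swap) (simp add: sum_distrib_left)
  finally show ?thesis by simp
qed

lemma index_poly_sum_of_powers: "index_poly (\<lambda>H p \<sigma> e. \<Sum>x=1..index_bound H p \<kappa>. real x ^ n)"
proof (induction n rule: less_induct)
  case (less n)
  have "(\<Sum>x=1..N. real x ^ n) = ((real N + 1) ^ (n + 1) + (- 1)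
      + (- 1) * (\<Sum>j<n. real (Suc n choose j) * (\<Sum>x=1..N. real x ^ j))) * (1 / real (n + 1))" for N
    using sum_of_powers_recurrence[of n N] by (simp add: field_simps)
  moreover have "index_poly (\<lambda>H p \<sigma> e. ((real (index_bound H p \<kappa>) + 1) ^ (n + 1) + (- 1)
      + (- 1) * (\<Sum>j<n. real (Suc n choose j) * (\<Sum>x=1..index_bound H p \<kappa>. real x ^ j))) * (1 / real (n + 1)))"
    by (intro index_poly.intros index_poly_power index_poly_sum index_poly_index_bound less) auto
  ultimately show ?case by simp
qed

section \<open>Summing over a bound index\<close>

(* The two ways a monomial can depend on the innermost index x of kind \<kappa>: through a delta
   tying x to another index, or only through a power of x. *)
definition delta_factor :: "index_kind \<Rightarrow> coeff \<Rightarrow> bool" where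
  "delta_factor \<kappa> m \<longleftrightarrow> (\<exists>v m'. index_monomial m' \<and> (\<forall>H p \<sigma> e x.
     m H p \<sigma> (push_env \<kappa> x e) = (if x = e \<kappa> v then 1 else 0) * m' H p \<sigma> (push_env \<kappa> x e)))"

definition power_factor :: "index_kind \<Rightarrow> coeff \<Rightarrow> bool" where
  "power_factor \<kappa> m \<longleftrightarrow> (\<exists>n m'. index_monomial m' \<and> (\<forall>H p \<sigma> e x.
     m H p \<sigma> (push_env \<kappa> x e) = real x ^ n * m' H p \<sigma> e))"

lemma power_factor_env_free:
  "index_monomial m \<Longrightarrow> (\<And>H p \<sigma> e e'. m H p \<sigma> e = m H p \<sigma> e') \<Longrightarrow> power_factor \<kappa> m"
  unfolding power_factor_def by (intro exI[of _ 0] exI[of _ m]) auto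

lemma power_factor_index_value: "power_factor \<kappa> (\<lambda>H p \<sigma> e. real (e \<kappa>' i))"
proof (cases "(\<kappa>', i) = (\<kappa>, 0)")
  case True
  then show ?thesis
    unfolding power_factor_def by (intro exI[of _ 1] exI[of _ "\<lambda>H p \<sigma> e. 1"]) (auto intro: index_monomial.const)
next
  case False
  then show ?thesis
    unfolding power_factor_def
    by (intro exI[of _ 0] exI[of _ "\<lambda>H p \<sigma> e. real (e \<kappa>' (if \<kappa>' = \<kappa> then i - 1 else i))"])
       (simp add: push_env_tail index_monomial.index_value)
qed

lemma delta_or_power_factor_index_eq:
  "delta_factor \<kappa> (\<lambda>H p \<sigma> e. if e \<kappa>' i = e \<kappa>' j then 1 else 0)
   \<or> power_factor \<kappa> (\<lambda>H p \<sigma> e. if e \<kappa>' i = e \<kappa>' j then 1 else 0)"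
proof -
  consider "(\<kappa>', i) = (\<kappa>, 0)" "(\<kappa>', j) = (\<kappa>, 0)" | "(\<kappa>', i) = (\<kappa>, 0)" "(\<kappa>', j) \<noteq> (\<kappa>, 0)"
    | "(\<kappa>', i) \<noteq> (\<kappa>, 0)" "(\<kappa>', j) = (\<kappa>, 0)" | "(\<kappa>', i) \<noteq> (\<kappa>, 0)" "(\<kappa>', j) \<noteq> (\<kappa>, 0)"
    by blast
  then show ?thesis
  proof cases
    case 1
    then show ?thesis
      by (intro disjI2 power_factor_env_free index_monomial.index_eq) auto
  next
    case 2
    then show ?thesis
      unfolding delta_factor_def
      by (intro disjI1 exI[of _ "j - 1"] exI[of _ "\<lambda>H p \<sigma> e. 1"]) (auto simp: push_env_tail intro: index_monomial.const)
  next
    case 3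
    then show ?thesis
      unfolding delta_factor_def
      by (intro disjI1 exI[of _ "i - 1"] exI[of _ "\<lambda>H p \<sigma> e. 1"]) (auto simp: push_env_tail intro: index_monomial.const)
  next
    case 4
    then show ?thesis
      unfolding power_factor_def
      by (intro disjI2 exI[of _ 0] exI[of _ "\<lambda>H p \<sigma> e.
            if e \<kappa>' (if \<kappa>' = \<kappa> then i - 1 else i) = e \<kappa>' (if \<kappa>' = \<kappa> then j - 1 else j) then 1 else 0"])
         (simp add: push_env_tail index_monomial.index_eq)
  qed
qed

lemma delta_factor_mult:
  assumes "index_monomial f" "index_monomial g" "delta_factor \<kappa> f \<or> delta_factor \<kappa> g"
  shows "delta_factor \<kappa> (\<lambda>H p \<sigma> e. f H p \<sigma> e * g H p \<sigma> e)"
  using assms(3)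
proof
  assume "delta_factor \<kappa> f"
  then obtain v f' where "index_monomial f'"
    "\<And>H p \<sigma> e x. f H p \<sigma> (push_env \<kappa> x e) = (if x = e \<kappa> v then 1 else 0) * f' H p \<sigma> (push_env \<kappa> x e)"
    unfolding delta_factor_def by blast
  with assms(2) show ?thesis
    unfolding delta_factor_def
    by (intro exI[of _ v] exI[of _ "\<lambda>H p \<sigma> e. f' H p \<sigma> e * g H p \<sigma> e"]) (simp add: index_monomial.mult)
next
  assume "delta_factor \<kappa> g"
  then obtain v g' where "index_monomial g'"
    "\<And>H p \<sigma> e x. g H p \<sigma> (push_env \<kappa> x e) = (if x = e \<kappa> v then 1 else 0) * g' H p \<sigma> (push_env \<kappa> x e)"
    unfolding delta_factor_def by blast
  with assms(1) show ?thesis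
    unfolding delta_factor_def
    by (intro exI[of _ v] exI[of _ "\<lambda>H p \<sigma> e. f H p \<sigma> e * g' H p \<sigma> e"]) (simp add: index_monomial.mult)
qed

lemma power_factor_mult:
  assumes "power_factor \<kappa> f" "power_factor \<kappa> g"
  shows "power_factor \<kappa> (\<lambda>H p \<sigma> e. f H p \<sigma> e * g H p \<sigma> e)"
proof -
  obtain n1 f' n2 g' where "index_monomial f'" "index_monomial g'"
    "\<And>H p \<sigma> e x. f H p \<sigma> (push_env \<kappa> x e) = real x ^ n1 * f' H p \<sigma> e"
    "\<And>H p \<sigma> e x. g H p \<sigma> (push_env \<kappa> x e) = real x ^ n2 * g' H p \<sigma> e"
    using assms unfolding power_factor_def by blast
  then show ?thesis
    unfolding power_factor_def
    by (intro exI[of _ "n1 + n2"] exI[of _ "\<lambda>H p \<sigma> e. f' H p \<sigma> e * g' H p \<sigma> e"])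
       (simp add: index_monomial.mult power_add)
qed

lemma delta_or_power_factor: "index_monomial m \<Longrightarrow> delta_factor \<kappa> m \<or> power_factor \<kappa> m"
proof (induction rule: index_monomial.induct)
  case index_eq
  show ?case by (rule delta_or_power_factor_index_eq)
next
  case (mult f g)
  then show ?case
    using delta_factor_mult power_factor_mult by blast
qed (auto intro: power_factor_env_free power_factor_index_value index_monomial.intros)

lemma delta_factor_sum_over_index:
  assumes "delta_factor \<kappa> m"
  obtains g where "index_poly g"
    "\<And>H p \<sigma> e. valid_env H p e \<Longrightarrow> (\<Sum>x=1..index_bound H p \<kappa>. m H p \<sigma> (push_env \<kappa> x e)) = g H p \<sigma> e"
proof -
  obtain v m' where m': "index_monomial m'"
    "\<And>H p \<sigma> e x. m H p \<sigma> (push_env \<kappa> x e) = (if x = e \<kappa> v then 1 else 0) * m' H p \<sigma> (push_env \<kappa> x e)"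
    using assms unfolding delta_factor_def by blast
  let ?r = "(\<lambda>_. id)(\<kappa> := case_nat v id)"
  show ?thesis
  proof (rule that)
    show "index_poly (\<lambda>H p \<sigma> e. m' H p \<sigma> (reindex_env ?r e))"
      by (rule index_poly_reindex[OF index_poly_if_monomial[OF m'(1)]])
  next
    fix H p \<sigma> e assume "valid_env H p e"
    then have "e \<kappa> v \<in> {1..index_bound H p \<kappa>}" by (simp add: valid_env_def)
    have "(\<Sum>x=1..index_bound H p \<kappa>. m H p \<sigma> (push_env \<kappa> x e))
        = (\<Sum>x=1..index_bound H p \<kappa>. if x = e \<kappa> v then m' H p \<sigma> (push_env \<kappa> x e) else 0)"
      by (intro sum.cong) (auto simp: m'(2))
    also have "\<dots> = m' H p \<sigma> (reindex_env ?r e)"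
      using \<open>e \<kappa> v \<in> _\<close> by (simp add: push_env_existing)
    finally show "(\<Sum>x=1..index_bound H p \<kappa>. m H p \<sigma> (push_env \<kappa> x e)) = m' H p \<sigma> (reindex_env ?r e)" .
  qed
qed

lemma power_factor_sum_over_index:
  assumes "power_factor \<kappa> m"
  obtains g where "index_poly g"
    "\<And>H p \<sigma> e. (\<Sum>x=1..index_bound H p \<kappa>. m H p \<sigma> (push_env \<kappa> x e)) = g H p \<sigma> e"
proof -
  obtain n m' where m': "index_monomial m'" "\<And>H p \<sigma> e x. m H p \<sigma> (push_env \<kappa> x e) = real x ^ n * m' H p \<sigma> e"
    using assms unfolding power_factor_def by blast
  show ?thesis
  proof (rule that)
    show "index_poly (\<lambda>H p \<sigma> e. (\<Sum>x=1..index_bound H p \<kappa>. real x ^ n) * m' H p \<sigma> e)"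
      by (rule index_poly.mult[OF index_poly_sum_of_powers index_poly_if_monomial[OF m'(1)]])
    show "(\<Sum>x=1..index_bound H p \<kappa>. m H p \<sigma> (push_env \<kappa> x e)) = (\<Sum>x=1..index_bound H p \<kappa>. real x ^ n) * m' H p \<sigma> e"
      for H p \<sigma> e
      by (simp add: m'(2) sum_distrib_right)
  qed
qed

lemma index_monomial_sum_over_index:
  assumes "index_monomial m"
  obtains g where "index_poly g"
    "\<And>H p \<sigma> e. valid_env H p e \<Longrightarrow> (\<Sum>x=1..index_bound H p \<kappa>. m H p \<sigma> (push_env \<kappa> x e)) = g H p \<sigma> e"
  using delta_or_power_factor[OF assms, of \<kappa>] delta_factor_sum_over_index power_factor_sum_over_index
  by metis

lemma index_poly_sum_over_index:
  assumes "index_poly f"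
  obtains g where "index_poly g"
    "\<And>H p \<sigma> e. valid_env H p e \<Longrightarrow> (\<Sum>x=1..index_bound H p \<kappa>. f H p \<sigma> (push_env \<kappa> x e)) = g H p \<sigma> e"
proof -
  have "index_monomial_sum f"
    using assms by (rule index_monomial_sum_if_poly)
  then have "\<exists>g. index_poly g \<and> (\<forall>H p \<sigma> e. valid_env H p e \<longrightarrow>
      (\<Sum>x=1..index_bound H p \<kappa>. f H p \<sigma> (push_env \<kappa> x e)) = g H p \<sigma> e)"
  proof (induction rule: index_monomial_sum.induct)
    case zero
    show ?case by (auto intro: index_poly.const)
  next
    case (add m f)
    obtain g1 where "index_poly g1"
      "\<And>H p \<sigma> e. valid_env H p e \<Longrightarrow> (\<Sum>x=1..index_bound H p \<kappa>. m H p \<sigma> (push_env \<kappa> x e)) = g1 H p \<sigma> e"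
      using index_monomial_sum_over_index[OF add.hyps(1)] by blast
    moreover obtain g2 where "index_poly g2"
      "\<And>H p \<sigma> e. valid_env H p e \<Longrightarrow> (\<Sum>x=1..index_bound H p \<kappa>. f H p \<sigma> (push_env \<kappa> x e)) = g2 H p \<sigma> e"
      using add.IH by blast
    ultimately show ?case
      by (intro exI[of _ "\<lambda>H p \<sigma> e. g1 H p \<sigma> e + g2 H p \<sigma> e"]) (simp add: sum.distrib index_poly.add)
  qed
  then show ?thesis using that by blast
qed

definition index_poly_on_valid :: "coeff \<Rightarrow> bool" where
  "index_poly_on_valid f \<longleftrightarrow>
     (\<exists>g. index_poly g \<and> (\<forall>H p \<sigma> e. 0 < \<sigma> \<longrightarrow> valid_env H p e \<longrightarrow> f H p \<sigma> e = g H p \<sigma> e))"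

lemma index_poly_on_validI: "index_poly f \<Longrightarrow> index_poly_on_valid f"
  unfolding index_poly_on_valid_def by blast

lemma index_poly_on_valid_cong:
  "index_poly_on_valid f \<Longrightarrow> (\<And>H p \<sigma> e. 0 < \<sigma> \<Longrightarrow> valid_env H p e \<Longrightarrow> f H p \<sigma> e = g H p \<sigma> e)
    \<Longrightarrow> index_poly_on_valid g"
  unfolding index_poly_on_valid_def by metis

lemma index_poly_on_valid_add:
  assumes "index_poly_on_valid f" "index_poly_on_valid g"
  shows "index_poly_on_valid (\<lambda>H p \<sigma> e. f H p \<sigma> e + g H p \<sigma> e)"
proof -
  from assms obtain f' g' where "index_poly f'" "index_poly g'"
    "\<And>H p \<sigma> e. 0 < \<sigma> \<Longrightarrow> valid_env H p e \<Longrightarrow> f H p \<sigma> e = f' H p \<sigma> e"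
    "\<And>H p \<sigma> e. 0 < \<sigma> \<Longrightarrow> valid_env H p e \<Longrightarrow> g H p \<sigma> e = g' H p \<sigma> e"
    unfolding index_poly_on_valid_def by blast
  then show ?thesis
    by (intro index_poly_on_valid_cong[OF index_poly_on_validI[OF index_poly.add]]) auto
qed

lemma index_poly_on_valid_mult:
  assumes "index_poly_on_valid f" "index_poly_on_valid g"
  shows "index_poly_on_valid (\<lambda>H p \<sigma> e. f H p \<sigma> e * g H p \<sigma> e)"
proof -
  from assms obtain f' g' where "index_poly f'" "index_poly g'"
    "\<And>H p \<sigma> e. 0 < \<sigma> \<Longrightarrow> valid_env H p e \<Longrightarrow> f H p \<sigma> e = f' H p \<sigma> e"
    "\<And>H p \<sigma> e. 0 < \<sigma> \<Longrightarrow> valid_env H p e \<Longrightarrow> g H p \<sigma> e = g' H p \<sigma> e"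
    unfolding index_poly_on_valid_def by blast
  then show ?thesis
    by (intro index_poly_on_valid_cong[OF index_poly_on_validI[OF index_poly.mult]]) auto
qed

lemma index_poly_on_valid_sum:
  "(\<And>a. a \<in> A \<Longrightarrow> index_poly_on_valid (f a)) \<Longrightarrow> index_poly_on_valid (\<lambda>H p \<sigma> e. \<Sum>a\<in>A. f a H p \<sigma> e)"
  by (induction A rule: infinite_finite_induct)
     (auto intro: index_poly_on_validI index_poly.const index_poly_on_valid_add)

lemma index_poly_on_valid_sum_over_index:
  assumes "index_poly_on_valid f"
  shows "index_poly_on_valid (\<lambda>H p \<sigma> e. \<Sum>x=1..index_bound H p \<kappa>. f H p \<sigma> (push_env \<kappa> x e))"
proof -
  from assms obtain f' where f': "index_poly f'"
    "\<And>H p \<sigma> e. 0 < \<sigma> \<Longrightarrow> valid_env H p e \<Longrightarrow> f H p \<sigma> e = f' H p \<sigma> e"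
    unfolding index_poly_on_valid_def by blast
  obtain g where "index_poly g"
    "\<And>H p \<sigma> e. valid_env H p e \<Longrightarrow> (\<Sum>x=1..index_bound H p \<kappa>. f' H p \<sigma> (push_env \<kappa> x e)) = g H p \<sigma> e"
    using index_poly_sum_over_index[OF f'(1)] by blast
  then show ?thesis
    by (intro index_poly_on_valid_cong[OF index_poly_on_validI[of g]]) (auto simp: f'(2) valid_env_push)
qed

lemma pvar_polynomial_if_index_poly:
  "index_poly g \<Longrightarrow> pvar_polynomial (\<lambda>H p \<sigma>. g H p \<sigma> (\<lambda>_ _. 1))"
proof (induction rule: index_poly.induct)
  case rank_bound
  then show ?case using pvar_polynomial_var[of PH] by (simp add: pvar_val_def)
next
  case coord_bound
  then show ?case using pvar_polynomial_var[of Pp] by (simp add: pvar_val_def)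
next
  case variance
  then show ?case using pvar_polynomial_var[of Psigma2] by (simp add: pvar_val_def)
qed (auto intro: pvar_polynomial_const pvar_polynomial_add pvar_polynomial_mult)

definition partially_differentiable :: "(('j \<Rightarrow> real) \<Rightarrow> real) \<Rightarrow> ('j \<Rightarrow> real) \<Rightarrow> 'j \<Rightarrow> bool" where
  "partially_differentiable f w j \<longleftrightarrow> (\<exists>D. ((\<lambda>x. f (w(j := x))) has_real_derivative D) (at (w j)))"

lemma partial_eqI: "((\<lambda>x. f (w(j := x))) has_real_derivative D) (at (w j)) \<Longrightarrow> partial f w j = D"
  unfolding partial_def by (rule DERIV_imp_deriv)

lemma has_partial:
  "partially_differentiable f w j \<Longrightarrow> ((\<lambda>x. f (w(j := x))) has_real_derivative partial f w j) (at (w j))"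
  unfolding partially_differentiable_def by (metis partial_eqI)

lemma partial_const:
  "partially_differentiable (\<lambda>w. c) w j" "partial (\<lambda>w. c) w j = 0"
proof -
  have D: "((\<lambda>x. c) has_real_derivative 0) (at (w j))"
    by simp
  then show "partially_differentiable (\<lambda>w. c) w j"
    unfolding partially_differentiable_def by blast
  show "partial (\<lambda>w. c) w j = 0"
    using partial_eqI[of "\<lambda>w. c" w j 0] D by simp
qed

lemma partial_coordinate:
  "partially_differentiable (\<lambda>w. w t) w j" "partial (\<lambda>w. w t) w j = (if t = j then 1 else 0)"
proof -
  have "((\<lambda>x. (w(j := x)) t) has_real_derivative (if t = j then 1 else 0)) (at (w j))"
    by (cases "t = j") auto
  then show "partially_differentiable (\<lambda>w. w t) w j" "partial (\<lambda>w. w t) w j = (if t = j then 1 else 0)"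
    unfolding partially_differentiable_def using partial_eqI[of "\<lambda>w. w t"] by auto
qed

lemma partial_add:
  assumes "partially_differentiable f w j" "partially_differentiable g w j"
  shows "partially_differentiable (\<lambda>w. f w + g w) w j"
    and "partial (\<lambda>w. f w + g w) w j = partial f w j + partial g w j"
  using DERIV_add[OF assms[THEN has_partial]] partial_eqI[of "\<lambda>w. f w + g w"]
  unfolding partially_differentiable_def by auto

lemma partial_mult:
  assumes "partially_differentiable f w j" "partially_differentiable g w j"
  shows "partially_differentiable (\<lambda>w. f w * g w) w j"
    and "partial (\<lambda>w. f w * g w) w j = partial f w j * g w + f w * partial g w j"
  using DERIV_mult[OF assms[THEN has_partial]] partial_eqI[of "\<lambda>w. f w * g w"]
  unfolding partially_differentiable_def by (auto simp: ac_simps)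

lemma partial_sum:
  assumes "\<And>a. a \<in> A \<Longrightarrow> partially_differentiable (f a) w j"
  shows "partially_differentiable (\<lambda>w. \<Sum>a\<in>A. f a w) w j"
    and "partial (\<lambda>w. \<Sum>a\<in>A. f a w) w j = (\<Sum>a\<in>A. partial (f a) w j)"
  using DERIV_sum[of A "\<lambda>x a. f a (w(j := x))", OF has_partial[OF assms]]
    partial_eqI[of "\<lambda>w. \<Sum>a\<in>A. f a w"]
  unfolding partially_differentiable_def by auto

section \<open>Weight polynomials\<close>

type_synonym weights = "nat \<times> nat \<times> nat \<Rightarrow> real"

type_synonym wexpr = "nat \<Rightarrow> nat \<Rightarrow> env \<Rightarrow> weights \<Rightarrow> real"

(* An atom (a, b, m) stands for the weight u^(m)_(k,i) with k, i the values of the bound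
   indices a (of kind Rank) and b (of kind Coord). *)
definition atom_param :: "env \<Rightarrow> nat \<times> nat \<times> nat \<Rightarrow> nat \<times> nat \<times> nat" where
  "atom_param e t = (e Rank (fst t), e Coord (fst (snd t)), snd (snd t))"

definition shift_atom :: "index_kind \<Rightarrow> nat \<times> nat \<times> nat \<Rightarrow> nat \<times> nat \<times> nat" where
  "shift_atom \<kappa> t = (case \<kappa> of Rank \<Rightarrow> (Suc (fst t), snd t) | Coord \<Rightarrow> (fst t, Suc (fst (snd t)), snd (snd t)))"

lemma atom_param_shift_atom [simp]: "atom_param (push_env \<kappa> x e) (shift_atom \<kappa> t) = atom_param e t"
  by (cases \<kappa>) (simp_all add: atom_param_def shift_atom_def push_env_def)

lemma atom_param_reindex:
  "atom_param (reindex_env r e) t = atom_param e (r Rank (fst t), r Coord (fst (snd t)), snd (snd t))"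
  by (simp add: atom_param_def reindex_env_def)

lemma atom_param_valid:
  "valid_env H p e \<Longrightarrow> snd (snd t) \<in> Ms \<Longrightarrow> atom_param e t \<in> {1..H} \<times> {1..p} \<times> Ms"
  by (auto simp: atom_param_def valid_env_def index_bound_def dest: spec[of _ Rank] spec[of _ Coord])

lemma index_poly_atom_eq: "index_poly (\<lambda>H p \<sigma> e. if atom_param e t = atom_param e t' then 1 else 0)"
proof -
  have eq: "(\<lambda>H p \<sigma> e. if atom_param e t = atom_param e t' then 1 else 0) =
    (\<lambda>H p \<sigma> e. (if e Rank (fst t) = e Rank (fst t') then 1 else 0)
     * ((if e Coord (fst (snd t)) = e Coord (fst (snd t')) then 1 else 0)
     * (if snd (snd t) = snd (snd t') then (1::real) else 0)))"
    by (auto simp: atom_param_def fun_eq_iff prod_eq_iff)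
  show ?thesis unfolding eq by (intro index_poly.intros)
qed

definition index_coeff :: "(nat \<Rightarrow> nat \<Rightarrow> env \<Rightarrow> real) \<Rightarrow> bool" where
  "index_coeff c \<longleftrightarrow> index_poly (\<lambda>H p \<sigma> e. c H p e)"

lemma index_coeff_const: "index_coeff (\<lambda>H p e. c)"
  unfolding index_coeff_def by (rule index_poly.const)

lemma index_coeff_reindex: "index_coeff c \<Longrightarrow> index_coeff (\<lambda>H p e. c H p (reindex_env r e))"
  unfolding index_coeff_def by (rule index_poly_reindex)

lemma index_coeff_atom_eq: "index_coeff (\<lambda>H p e. if atom_param e t = atom_param e t' then 1 else 0)"
  unfolding index_coeff_def by (rule index_poly_atom_eq)

(* Weights are multiplied in one at a time, so that an expectation can collect them into a
   monomial (index_poly_on_valid_expectation). *)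
inductive weight_poly :: "nat set \<Rightarrow> wexpr \<Rightarrow> bool" for Ms where
  coeff: "index_coeff c \<Longrightarrow> weight_poly Ms (\<lambda>H p e w. c H p e)"
| coeff_mult: "index_coeff c \<Longrightarrow> weight_poly Ms F \<Longrightarrow>
    weight_poly Ms (\<lambda>H p e w. c H p e * F H p e w)"
| weight_mult: "snd (snd t) \<in> Ms \<Longrightarrow> weight_poly Ms F \<Longrightarrow>
    weight_poly Ms (\<lambda>H p e w. w (atom_param e t) * F H p e w)"
| add: "weight_poly Ms F \<Longrightarrow> weight_poly Ms G \<Longrightarrow> weight_poly Ms (\<lambda>H p e w. F H p e w + G H p e w)"
| sum_over_index: "weight_poly Ms F \<Longrightarrow>
    weight_poly Ms (\<lambda>H p e w. \<Sum>x=1..index_bound H p \<kappa>. F H p (push_env \<kappa> x e) w)"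

lemma weight_poly_cong: "weight_poly Ms F \<Longrightarrow> (\<And>H p e w. F H p e w = G H p e w) \<Longrightarrow> weight_poly Ms G"
proof -
  assume "weight_poly Ms F" "\<And>H p e w. F H p e w = G H p e w"
  moreover from this(2) have "F = G" by (intro ext)
  ultimately show ?thesis by simp
qed

lemma weight_poly_const: "weight_poly Ms (\<lambda>H p e w. c)"
  using weight_poly.coeff[OF index_coeff_const[of c]] .

lemma weight_poly_scale: "weight_poly Ms F \<Longrightarrow> weight_poly Ms (\<lambda>H p e w. c * F H p e w)"
  using weight_poly.coeff_mult[OF index_coeff_const[of c]] .

lemma weight_poly_weight: "snd (snd t) \<in> Ms \<Longrightarrow> weight_poly Ms (\<lambda>H p e w. w (atom_param e t))"
  using weight_poly.weight_mult[OF _ weight_poly_const[of Ms 1]] by simp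

lemma weight_poly_reindex: "weight_poly Ms F \<Longrightarrow> weight_poly Ms (\<lambda>H p e w. F H p (reindex_env r e) w)"
proof (induction arbitrary: r rule: weight_poly.induct)
  case (coeff c)
  show ?case
    using weight_poly.coeff[OF index_coeff_reindex[OF coeff, of r]] .
next
  case (coeff_mult c F)
  show ?case
    using weight_poly.coeff_mult[OF index_coeff_reindex[OF coeff_mult.hyps(1), of r] coeff_mult.IH] .
next
  case (weight_mult t F)
  show ?case
    using weight_poly.weight_mult[OF _ weight_mult.IH, of "(r Rank (fst t), r Coord (fst (snd t)), snd (snd t))"]
      weight_mult.hyps by (simp add: atom_param_reindex)
next
  case (add F G)
  show ?case using weight_poly.add[OF add.IH] .
next
  case (sum_over_index F \<kappa>)
  show ?case
    by (rule weight_poly_cong[OF weight_poly.sum_over_index[OF sum_over_index.IH]])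
       (simp only: push_env_reindex)
qed

lemma weight_poly_mult:
  "weight_poly Ms F \<Longrightarrow> weight_poly Ms G \<Longrightarrow> weight_poly Ms (\<lambda>H p e w. F H p e w * G H p e w)"
proof (induction arbitrary: G rule: weight_poly.induct)
  case (coeff c)
  then show ?case by (rule weight_poly.coeff_mult)
next
  case (coeff_mult c F)
  show ?case
    by (rule weight_poly_cong[OF weight_poly.coeff_mult[OF coeff_mult.hyps(1) coeff_mult.IH[OF coeff_mult.prems]]])
       (simp only: mult.assoc)
next
  case (weight_mult t F)
  show ?case
    by (rule weight_poly_cong[OF weight_poly.weight_mult[OF weight_mult.hyps(1) weight_mult.IH[OF weight_mult.prems]]])
       (simp only: mult.assoc)
next
  case (add F1 F2)
  show ?case
    by (rule weight_poly_cong[OF weight_poly.add[OF add.IH(1)[OF add.prems] add.IH(2)[OF add.prems]]])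
       (simp only: distrib_right)
next
  case (sum_over_index F \<kappa>)
  have G': "weight_poly Ms (\<lambda>H p e w. G H p (reindex_env ((\<lambda>_. id)(\<kappa> := Suc)) e) w)"
    by (rule weight_poly_reindex[OF sum_over_index.prems])
  show ?case
    by (rule weight_poly_cong[OF weight_poly.sum_over_index[where \<kappa>=\<kappa>, OF sum_over_index.IH[OF G']]])
       (simp only: reindex_pop_push sum_distrib_right)
qed

lemma weight_poly_sum:
  "(\<And>a. a \<in> A \<Longrightarrow> weight_poly Ms (F a)) \<Longrightarrow> weight_poly Ms (\<lambda>H p e w. \<Sum>a\<in>A. F a H p e w)"
  by (induction A rule: infinite_finite_induct) (auto intro: weight_poly_const weight_poly.add)

lemma weight_poly_prod:
  "(\<And>a. a \<in> A \<Longrightarrow> weight_poly Ms (F a)) \<Longrightarrow> weight_poly Ms (\<lambda>H p e w. \<Prod>a\<in>A. F a H p e w)"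
  by (induction A rule: infinite_finite_induct) (auto intro: weight_poly_const weight_poly_mult)

lemma weight_poly_partially_differentiable:
  "weight_poly Ms F \<Longrightarrow> partially_differentiable (F H p e) w j"
  by (induction arbitrary: e rule: weight_poly.induct)
     (auto intro: partial_const partial_coordinate partial_add partial_mult partial_sum)

lemma weight_poly_partial:
  "weight_poly Ms F \<Longrightarrow> weight_poly Ms (\<lambda>H p e w. partial (F H p e) w (atom_param e t))"
proof (induction arbitrary: t rule: weight_poly.induct)
  case (coeff c)
  show ?case by (simp add: partial_const(2) weight_poly_const)
next
  case (coeff_mult c F)
  show ?case
    using weight_poly.coeff_mult[OF coeff_mult.hyps(1) coeff_mult.IH]
    by (simp add: partial_mult(2)[OF partial_const(1) weight_poly_partially_differentiable[OF coeff_mult.hyps(2)]]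
        partial_const(2))
next
  case (weight_mult t0 F)
  have "weight_poly Ms (\<lambda>H p e w. (if atom_param e t0 = atom_param e t then 1 else 0) * F H p e w
      + w (atom_param e t0) * partial (F H p e) w (atom_param e t))"
    by (intro weight_poly.add weight_poly.coeff_mult weight_poly.weight_mult index_coeff_atom_eq weight_mult)
  then show ?case
    by (simp add: partial_mult(2)[OF partial_coordinate(1) weight_poly_partially_differentiable[OF weight_mult.hyps(2)]]
        partial_coordinate(2))
next
  case (add F G)
  show ?case
    using weight_poly.add[OF add.IH]
    by (simp add: partial_add(2)[OF add.hyps[THEN weight_poly_partially_differentiable]])
next
  case (sum_over_index F \<kappa>)
  show ?case
    using weight_poly.sum_over_index[OF sum_over_index.IH[of "shift_atom \<kappa> t"], of \<kappa>]
    by (simp add: partial_sum(2)[OF weight_poly_partially_differentiable[OF sum_over_index.hyps]])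
qed

definition has_chain_rule :: "nat set \<Rightarrow> (real \<Rightarrow> weights) \<Rightarrow> weights \<Rightarrow> real \<Rightarrow> wexpr \<Rightarrow> bool" where
  "has_chain_rule Ms \<psi> \<psi>' t F \<longleftrightarrow> (\<forall>H p e. valid_env H p e \<longrightarrow>
     (\<forall>j\<in>{1..H} \<times> {1..p} \<times> Ms. ((\<lambda>\<tau>. \<psi> \<tau> j) has_real_derivative \<psi>' j) (at t)) \<longrightarrow>
     ((\<lambda>\<tau>. F H p e (\<psi> \<tau>)) has_real_derivative
        (\<Sum>j\<in>{1..H} \<times> {1..p} \<times> Ms. partial (F H p e) (\<psi> t) j * \<psi>' j)) (at t))"

lemma has_chain_rule_coeff: "has_chain_rule Ms \<psi> \<psi>' t (\<lambda>H p e w. c H p e)"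
  unfolding has_chain_rule_def by (simp add: partial_const(2))

lemma has_chain_rule_coeff_mult:
  assumes "weight_poly Ms F" "has_chain_rule Ms \<psi> \<psi>' t F"
  shows "has_chain_rule Ms \<psi> \<psi>' t (\<lambda>H p e w. c H p e * F H p e w)"
  unfolding has_chain_rule_def
proof (intro allI impI)
  fix H p :: nat and e :: env
  let ?S = "{1..H} \<times> {1..p} \<times> Ms"
  assume "valid_env H p e" "\<forall>j\<in>?S. ((\<lambda>\<tau>. \<psi> \<tau> j) has_real_derivative \<psi>' j) (at t)"
  with assms(2) have F: "((\<lambda>\<tau>. F H p e (\<psi> \<tau>)) has_real_derivative
      (\<Sum>j\<in>?S. partial (F H p e) (\<psi> t) j * \<psi>' j)) (at t)"
    unfolding has_chain_rule_def by blast
  have "partial (\<lambda>w. c H p e * F H p e w) (\<psi> t) j = c H p e * partial (F H p e) (\<psi> t) j" for j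
    using partial_mult(2)[OF partial_const(1) weight_poly_partially_differentiable[OF assms(1)]]
    by (simp add: partial_const(2))
  then show "((\<lambda>\<tau>. c H p e * F H p e (\<psi> \<tau>)) has_real_derivative
      (\<Sum>j\<in>?S. partial (\<lambda>w. c H p e * F H p e w) (\<psi> t) j * \<psi>' j)) (at t)"
    using DERIV_cmult[OF F, of "c H p e"] by (simp add: sum_distrib_left mult.assoc)
qed

lemma has_chain_rule_weight_mult:
  assumes "finite Ms" "snd (snd a) \<in> Ms" "weight_poly Ms F" "has_chain_rule Ms \<psi> \<psi>' t F"
  shows "has_chain_rule Ms \<psi> \<psi>' t (\<lambda>H p e w. w (atom_param e a) * F H p e w)"
  unfolding has_chain_rule_def
proof (intro allI impI)
  fix H p :: nat and e :: env
  let ?S = "{1..H} \<times> {1..p} \<times> Ms" and ?j0 = "atom_param e a"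
  assume valid: "valid_env H p e" and \<psi>: "\<forall>j\<in>?S. ((\<lambda>\<tau>. \<psi> \<tau> j) has_real_derivative \<psi>' j) (at t)"
  with assms(4) have F: "((\<lambda>\<tau>. F H p e (\<psi> \<tau>)) has_real_derivative
      (\<Sum>j\<in>?S. partial (F H p e) (\<psi> t) j * \<psi>' j)) (at t)"
    unfolding has_chain_rule_def by blast
  have j0: "?j0 \<in> ?S"
    using atom_param_valid[OF valid assms(2)] .
  have "partial (\<lambda>w. w ?j0 * F H p e w) (\<psi> t) j
      = (if ?j0 = j then F H p e (\<psi> t) else 0) + \<psi> t ?j0 * partial (F H p e) (\<psi> t) j" for j
    using partial_mult(2)[OF partial_coordinate(1) weight_poly_partially_differentiable[OF assms(3)]]
    by (simp add: partial_coordinate(2))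
  then have "(\<Sum>j\<in>?S. partial (\<lambda>w. w ?j0 * F H p e w) (\<psi> t) j * \<psi>' j)
      = (\<Sum>j\<in>?S. (if ?j0 = j then F H p e (\<psi> t) * \<psi>' j else 0)
          + \<psi> t ?j0 * (partial (F H p e) (\<psi> t) j * \<psi>' j))"
    by (intro sum.cong) (simp_all add: distrib_right)
  also have "\<dots> = \<psi>' ?j0 * F H p e (\<psi> t) + \<psi> t ?j0 * (\<Sum>j\<in>?S. partial (F H p e) (\<psi> t) j * \<psi>' j)"
    using j0 assms(1) by (simp add: sum.distrib sum_distrib_left)
  finally show "((\<lambda>\<tau>. \<psi> \<tau> ?j0 * F H p e (\<psi> \<tau>)) has_real_derivative
      (\<Sum>j\<in>?S. partial (\<lambda>w. w ?j0 * F H p e w) (\<psi> t) j * \<psi>' j)) (at t)"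
    using DERIV_mult[OF \<psi>[rule_format, OF j0] F] by (simp add: mult.commute)
qed

lemma has_chain_rule_add:
  assumes "weight_poly Ms F" "weight_poly Ms G" "has_chain_rule Ms \<psi> \<psi>' t F" "has_chain_rule Ms \<psi> \<psi>' t G"
  shows "has_chain_rule Ms \<psi> \<psi>' t (\<lambda>H p e w. F H p e w + G H p e w)"
  using assms(3,4)
  unfolding has_chain_rule_def
  by (simp add: partial_add(2)[OF assms(1,2)[THEN weight_poly_partially_differentiable]]
      distrib_right sum.distrib DERIV_add)

lemma has_chain_rule_sum_over_index:
  assumes "weight_poly Ms F" "has_chain_rule Ms \<psi> \<psi>' t F"
  shows "has_chain_rule Ms \<psi> \<psi>' t (\<lambda>H p e w. \<Sum>x=1..index_bound H p \<kappa>. F H p (push_env \<kappa> x e) w)"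
  unfolding has_chain_rule_def
proof (intro allI impI)
  fix H p :: nat and e :: env
  let ?S = "{1..H} \<times> {1..p} \<times> Ms" and ?X = "{1..index_bound H p \<kappa>}"
  assume valid: "valid_env H p e" and \<psi>: "\<forall>j\<in>?S. ((\<lambda>\<tau>. \<psi> \<tau> j) has_real_derivative \<psi>' j) (at t)"
  have "(\<Sum>j\<in>?S. partial (\<lambda>w. \<Sum>x\<in>?X. F H p (push_env \<kappa> x e) w) (\<psi> t) j * \<psi>' j)
      = (\<Sum>j\<in>?S. \<Sum>x\<in>?X. partial (F H p (push_env \<kappa> x e)) (\<psi> t) j * \<psi>' j)"
    by (simp add: partial_sum(2)[OF weight_poly_partially_differentiable[OF assms(1)]] sum_distrib_right)
  also have "\<dots> = (\<Sum>x\<in>?X. \<Sum>j\<in>?S. partial (F H p (push_env \<kappa> x e)) (\<psi> t) j * \<psi>' j)"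
    by (rule sum.swap)
  finally have sum: "(\<Sum>j\<in>?S. partial (\<lambda>w. \<Sum>x\<in>?X. F H p (push_env \<kappa> x e) w) (\<psi> t) j * \<psi>' j)
      = (\<Sum>x\<in>?X. \<Sum>j\<in>?S. partial (F H p (push_env \<kappa> x e)) (\<psi> t) j * \<psi>' j)" .
  have "((\<lambda>\<tau>. \<Sum>x\<in>?X. F H p (push_env \<kappa> x e) (\<psi> \<tau>)) has_real_derivative
      (\<Sum>x\<in>?X. \<Sum>j\<in>?S. partial (F H p (push_env \<kappa> x e)) (\<psi> t) j * \<psi>' j)) (at t)"
  proof (rule DERIV_sum)
    fix x assume "x \<in> ?X"
    then show "((\<lambda>\<tau>. F H p (push_env \<kappa> x e) (\<psi> \<tau>)) has_real_derivative
        (\<Sum>j\<in>?S. partial (F H p (push_env \<kappa> x e)) (\<psi> t) j * \<psi>' j)) (at t)"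
      using assms(2) valid_env_push[OF valid, of x \<kappa>] \<psi> unfolding has_chain_rule_def by blast
  qed
  with sum show "((\<lambda>\<tau>. \<Sum>x\<in>?X. F H p (push_env \<kappa> x e) (\<psi> \<tau>)) has_real_derivative
      (\<Sum>j\<in>?S. partial (\<lambda>w. \<Sum>x\<in>?X. F H p (push_env \<kappa> x e) w) (\<psi> t) j * \<psi>' j)) (at t)"
    by simp
qed

lemma weight_poly_chain_rule:
  assumes "weight_poly Ms F" "finite Ms" "valid_env H p e"
    and "\<And>j. j \<in> {1..H} \<times> {1..p} \<times> Ms \<Longrightarrow> ((\<lambda>\<tau>. \<psi> \<tau> j) has_real_derivative \<psi>' j) (at t)"
  shows "((\<lambda>\<tau>. F H p e (\<psi> \<tau>)) has_real_derivative
           (\<Sum>j\<in>{1..H} \<times> {1..p} \<times> Ms. partial (F H p e) (\<psi> t) j * \<psi>' j)) (at t)"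
proof -
  have "has_chain_rule Ms \<psi> \<psi>' t F"
    using assms(1)
  proof (induction rule: weight_poly.induct)
    case (coeff c)
    show ?case by (rule has_chain_rule_coeff)
  next
    case (coeff_mult c F)
    show ?case by (rule has_chain_rule_coeff_mult[OF coeff_mult.hyps(2) coeff_mult.IH])
  next
    case (weight_mult a F)
    show ?case by (rule has_chain_rule_weight_mult[OF assms(2) weight_mult.hyps weight_mult.IH])
  next
    case (add F G)
    show ?case by (rule has_chain_rule_add[OF add.hyps add.IH])
  next
    case (sum_over_index F \<kappa>)
    show ?case by (rule has_chain_rule_sum_over_index[OF sum_over_index.hyps sum_over_index.IH])
  qed
  with assms(3,4) show ?thesis
    unfolding has_chain_rule_def by blast
qed

lemma weight_poly_gradient_inner:
  assumes "weight_poly Ms F" "weight_poly Ms G" "finite Ms"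
  shows "weight_poly Ms (\<lambda>H p e w. \<Sum>j\<in>{1..H} \<times> {1..p} \<times> Ms. partial (F H p e) w j * partial (G H p e) w j)"
proof -
  let ?pop = "reindex_env (\<lambda>_. Suc)"
  have pop: "?pop (push_env Coord y (push_env Rank x e)) = e" for x y e
    by (simp add: reindex_env_def push_env_def fun_eq_iff) (metis index_kind.exhaust)
  have atom: "atom_param (push_env Coord y (push_env Rank x e)) (0, 0, m) = (x, y, m)" for x y m e
    by (simp add: atom_param_def push_env_def)
  have "weight_poly Ms (\<lambda>H p e w. \<Sum>m\<in>Ms. partial (F H p (?pop e)) w (atom_param e (0, 0, m))
                                              * partial (G H p (?pop e)) w (atom_param e (0, 0, m)))"
    using assms by (intro weight_poly_sum weight_poly_mult weight_poly_partial weight_poly_reindex)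
  from weight_poly.sum_over_index[where \<kappa>=Rank, OF weight_poly.sum_over_index[where \<kappa>=Coord, OF this]]
  show ?thesis
    by (simp add: pop atom index_bound_def sum.cartesian_product)
qed

section \<open>Gaussian moments\<close>

definition centered_normal :: "real \<Rightarrow> real measure" where
  "centered_normal \<sigma> = density lborel (normal_density 0 \<sigma>)"

definition normal_moment :: "real \<Rightarrow> nat \<Rightarrow> real" where
  "normal_moment \<sigma> n = (\<integral>x. x ^ n \<partial>centered_normal \<sigma>)"

lemma integrable_centered_normal_power: "0 < \<sigma> \<Longrightarrow> integrable (centered_normal \<sigma>) (\<lambda>x. x ^ n)"
  unfolding centered_normal_def
  by (subst integrable_density) (use integrable_normal_moment[of \<sigma> 0 n] in auto)

lemma normal_moment_eq: "0 < \<sigma> \<Longrightarrow> normal_moment \<sigma> n = (\<integral>x. normal_density 0 \<sigma> x * x ^ n \<partial>lborel)"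
  unfolding normal_moment_def centered_normal_def by (subst integral_density) auto

lemma normal_moment_even_eq: "0 < \<sigma> \<Longrightarrow> normal_moment \<sigma> (2 * k) = fact (2 * k) / ((2 / \<sigma>\<^sup>2) ^ k * fact k)"
  using integral_normal_moment_even[of \<sigma> 0 k] by (simp add: normal_moment_eq)

lemma normal_moment_odd_eq: "0 < \<sigma> \<Longrightarrow> normal_moment \<sigma> (2 * k + 1) = 0"
  using integral_normal_moment_odd[of \<sigma> 0 k] by (simp add: normal_moment_eq)

lemma normal_moment_0: "0 < \<sigma> \<Longrightarrow> normal_moment \<sigma> 0 = 1"
  using normal_moment_even_eq[of \<sigma> 0] by simp

lemma normal_moment_1: "0 < \<sigma> \<Longrightarrow> normal_moment \<sigma> 1 = 0"
  using normal_moment_odd_eq[of \<sigma> 0] by simp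

lemma normal_moment_Suc_Suc:
  assumes "0 < \<sigma>"
  shows "normal_moment \<sigma> (Suc (Suc n)) = real (Suc n) * \<sigma>\<^sup>2 * normal_moment \<sigma> n"
proof (cases "even n")
  case True
  then obtain k where k: "n = 2 * k" by blast
  have "Suc (Suc n) = 2 * Suc k" using k by simp
  then have "normal_moment \<sigma> (Suc (Suc n)) = fact (2 * Suc k) / ((2 / \<sigma>\<^sup>2) ^ Suc k * fact (Suc k))"
    using normal_moment_even_eq[OF assms, of "Suc k"] by (simp only:)
  also have "\<dots> = (fact (2 * k) * ((2 * real k + 2) * (2 * real k + 1)))
                    / (((2 / \<sigma>\<^sup>2) ^ k * fact k) * ((2 / \<sigma>\<^sup>2) * (real k + 1)))"
    by (simp add: algebra_simps)
  also have "\<dots> = (fact (2 * k) / ((2 / \<sigma>\<^sup>2) ^ k * fact k))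
                    * (((2 * real k + 2) * (2 * real k + 1)) / ((2 / \<sigma>\<^sup>2) * (real k + 1)))"
    by (rule times_divide_times_eq[symmetric])
  also have "((2 * real k + 2) * (2 * real k + 1)) / ((2 / \<sigma>\<^sup>2) * (real k + 1)) = real (Suc n) * \<sigma>\<^sup>2"
    using assms k by (simp add: field_simps)
  finally show ?thesis
    using normal_moment_even_eq[OF assms, of k] k by (simp add: ac_simps)
next
  case False
  then obtain k where k: "n = 2 * k + 1" by (metis oddE)
  have "Suc (Suc n) = 2 * Suc k + 1" using k by simp
  then have "normal_moment \<sigma> (Suc (Suc n)) = 0"
    using normal_moment_odd_eq[OF assms, of "Suc k"] by (simp only:)
  moreover have "normal_moment \<sigma> n = 0"
    using normal_moment_odd_eq[OF assms, of k] k by simp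
  ultimately show ?thesis by simp
qed

lemma prod_list_map_eq_prod_count:
  assumes "finite I" "set js \<subseteq> I"
  shows "prod_list (map f js) = (\<Prod>j\<in>I. (f j :: real) ^ count (mset js) j)"
  using assms(2)
proof (induction js)
  case (Cons a js)
  then have "(\<Prod>j\<in>I. f j ^ count (mset (a # js)) j) = (\<Prod>j\<in>I. f j ^ count (mset js) j * (if j = a then f j else 1))"
    by (intro prod.cong) auto
  also have "\<dots> = (\<Prod>j\<in>I. f j ^ count (mset js) j) * f a"
    using Cons.prems assms(1) by (simp add: prod.distrib)
  finally show ?case using Cons by simp
qed simp

lemma
  assumes "0 < \<sigma>" "finite I" "set js \<subseteq> I"
  shows integrable_prod_list_centered_normal:
      "integrable (PiM I (\<lambda>_. centered_normal \<sigma>)) (\<lambda>w. prod_list (map w js))"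
    and integral_prod_list_centered_normal:
      "(\<integral>w. prod_list (map w js) \<partial>PiM I (\<lambda>_. centered_normal \<sigma>)) = (\<Prod>j\<in>I. normal_moment \<sigma> (count (mset js) j))"
proof -
  interpret product_sigma_finite "\<lambda>_. centered_normal \<sigma>"
    unfolding product_sigma_finite_def centered_normal_def
    using prob_space_normal_density[OF assms(1)] by (auto intro: prob_space_imp_sigma_finite)
  have eq: "(\<lambda>w. prod_list (map w js) :: real) = (\<lambda>w. \<Prod>j\<in>I. w j ^ count (mset js) j)"
    by (rule ext, rule prod_list_map_eq_prod_count[OF assms(2,3)])
  show "integrable (PiM I (\<lambda>_. centered_normal \<sigma>)) (\<lambda>w. prod_list (map w js))"
    unfolding eq
    by (rule product_integrable_prod[of I "\<lambda>j x. x ^ count (mset js) j", simplified])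
       (auto simp: assms(2) integrable_centered_normal_power[OF assms(1)])
  show "(\<integral>w. prod_list (map w js) \<partial>PiM I (\<lambda>_. centered_normal \<sigma>)) = (\<Prod>j\<in>I. normal_moment \<sigma> (count (mset js) j))"
    unfolding eq
    by (subst product_integral_prod[of I "\<lambda>j x. x ^ count (mset js) j", simplified])
       (auto simp: assms(2) integrable_centered_normal_power[OF assms(1)] normal_moment_def)
qed

definition remove_nth :: "nat \<Rightarrow> 'a list \<Rightarrow> 'a list" where
  "remove_nth r xs = take r xs @ drop (Suc r) xs"

lemma mset_remove_nth: "r < length xs \<Longrightarrow> mset (remove_nth r xs) = mset xs - {#xs ! r#}"
  unfolding remove_nth_def by (subst (2) id_take_nth_drop[of r xs]) simp_all

lemma remove_nth_map: "remove_nth r (map f xs) = map f (remove_nth r xs)"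
  unfolding remove_nth_def by (simp add: take_map drop_map)

lemma length_remove_nth: "r < length xs \<Longrightarrow> length (remove_nth r xs) < length xs"
  unfolding remove_nth_def by simp

lemma set_remove_nth_subset: "set (remove_nth r xs) \<subseteq> set xs"
  unfolding remove_nth_def by (auto dest: in_set_takeD in_set_dropD)

lemma sum_nth_eq_count: "(\<Sum>r<length js. if j = js ! r then (K::real) else 0) = real (count (mset js) j) * K"
proof -
  have "card {r. r < length js \<and> j = js ! r} = count (mset js) j"
    by (simp add: count_mset count_list_eq_length_filter length_filter_conv_card eq_commute)
  moreover have "(\<Sum>r<length js. if j = js ! r then K else 0) = real (card {r. r < length js \<and> j = js ! r}) * K"
    by (simp add: sum.If_cases[of "{..<length js}"] Int_def conj_commute)
  ultimately show ?thesis by simp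
qed

(* Isserlis' recursion for the moments of independent centred Gaussians. *)
lemma prod_normal_moment_Cons:
  assumes "0 < \<sigma>" "finite I" "j1 \<in> I"
  shows "(\<Prod>j\<in>I. normal_moment \<sigma> (count (mset (j1 # js)) j)) =
     \<sigma>\<^sup>2 * (\<Sum>r<length js. if j1 = js ! r then (\<Prod>j\<in>I. normal_moment \<sigma> (count (mset (remove_nth r js)) j)) else 0)"
proof -
  let ?c = "count (mset js) j1"
  let ?R = "\<Prod>j\<in>I - {j1}. normal_moment \<sigma> (count (mset js) j)"
  have split: "(\<Prod>j\<in>I. normal_moment \<sigma> (count M j)) = normal_moment \<sigma> (count M j1) * ?R"
    if "\<And>j. j \<noteq> j1 \<Longrightarrow> count M j = count (mset js) j" for M
  proof -
    have "(\<Prod>j\<in>I. normal_moment \<sigma> (count M j)) = normal_moment \<sigma> (count M j1) * (\<Prod>j\<in>I - {j1}. normal_moment \<sigma> (count M j))"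
      by (rule prod.remove[OF assms(2,3)])
    also have "(\<Prod>j\<in>I - {j1}. normal_moment \<sigma> (count M j)) = ?R"
      using that by (intro prod.cong) auto
    finally show ?thesis .
  qed
  have remove: "(\<Prod>j\<in>I. normal_moment \<sigma> (count (mset (remove_nth r js)) j)) = normal_moment \<sigma> (?c - 1) * ?R"
    if "r < length js" "j1 = js ! r" for r
    using split[of "mset (remove_nth r js)"] that by (simp add: mset_remove_nth)
  have moment: "normal_moment \<sigma> (Suc c) = \<sigma>\<^sup>2 * (real c * normal_moment \<sigma> (c - 1))" for c
    using assms(1) normal_moment_1 by (cases c) (simp_all add: normal_moment_Suc_Suc)
  have "(\<Prod>j\<in>I. normal_moment \<sigma> (count (mset (j1 # js)) j)) = normal_moment \<sigma> (Suc ?c) * ?R"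
    using split[of "mset (j1 # js)"] by simp
  also have "\<dots> = \<sigma>\<^sup>2 * (real ?c * (normal_moment \<sigma> (?c - 1) * ?R))"
    unfolding moment by (simp only: mult.assoc)
  also have "\<dots> = \<sigma>\<^sup>2 * (\<Sum>r<length js. if j1 = js ! r then normal_moment \<sigma> (?c - 1) * ?R else 0)"
    by (simp only: sum_nth_eq_count)
  also have "\<dots> = \<sigma>\<^sup>2 * (\<Sum>r<length js. if j1 = js ! r then (\<Prod>j\<in>I. normal_moment \<sigma> (count (mset (remove_nth r js)) j)) else 0)"
    by (intro arg_cong[where f="(*) _"] sum.cong) (simp_all add: remove)
  finally show ?thesis .
qed

section \<open>Expectations of weight polynomials\<close>

definition layers :: "scenario \<Rightarrow> nat \<Rightarrow> nat set" where
  "layers sc \<nu> = (case sc of ASYM \<Rightarrow> {1..\<nu>} | SYM \<Rightarrow> {1})"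

lemma finite_layers: "finite (layers sc \<nu>)"
  by (cases sc) (simp_all add: layers_def)

lemma params_eq: "params sc H p \<nu> = {1..H} \<times> {1..p} \<times> layers sc \<nu>"
  unfolding params_def layers_def ..

lemma finite_params: "finite (params sc H p \<nu>)"
  by (simp add: params_eq finite_layers)

lemma init_measure_eq: "init_measure sc H p \<nu> \<sigma> = PiM (params sc H p \<nu>) (\<lambda>_. centered_normal \<sigma>)"
  unfolding init_measure_def centered_normal_def ..

definition atom_monomial :: "env \<Rightarrow> (nat \<times> nat \<times> nat) list \<Rightarrow> weights \<Rightarrow> real" where
  "atom_monomial e ts w = prod_list (map (\<lambda>t. w (atom_param e t)) ts)"

lemma atom_monomial_Cons: "atom_monomial e (t # ts) w = w (atom_param e t) * atom_monomial e ts w"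
  by (simp add: atom_monomial_def)

lemma atom_monomial_shift: "atom_monomial (push_env \<kappa> x e) (map (shift_atom \<kappa>) ts) w = atom_monomial e ts w"
  by (simp add: atom_monomial_def comp_def)

lemma
  assumes "0 < \<sigma>" "valid_env H p e" "\<forall>t\<in>set ts. snd (snd t) \<in> layers sc \<nu>"
  shows integrable_atom_monomial: "integrable (init_measure sc H p \<nu> \<sigma>) (atom_monomial e ts)"
    and integral_atom_monomial: "(\<integral>w. atom_monomial e ts w \<partial>init_measure sc H p \<nu> \<sigma>)
      = (\<Prod>j\<in>params sc H p \<nu>. normal_moment \<sigma> (count (mset (map (atom_param e) ts)) j))"
proof -
  have eq: "atom_monomial e ts = (\<lambda>w. prod_list (map w (map (atom_param e) ts)))"
    by (simp add: atom_monomial_def comp_def fun_eq_iff)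
  have "atom_param e t \<in> params sc H p \<nu>" if "t \<in> set ts" for t
    unfolding params_eq using atom_param_valid[OF assms(2)] assms(3) that by blast
  then have js: "set (map (atom_param e) ts) \<subseteq> params sc H p \<nu>"
    by auto
  show "integrable (init_measure sc H p \<nu> \<sigma>) (atom_monomial e ts)"
    unfolding eq init_measure_eq by (rule integrable_prod_list_centered_normal[OF assms(1) finite_params js])
  show "(\<integral>w. atom_monomial e ts w \<partial>init_measure sc H p \<nu> \<sigma>)
      = (\<Prod>j\<in>params sc H p \<nu>. normal_moment \<sigma> (count (mset (map (atom_param e) ts)) j))"
    unfolding eq init_measure_eq by (rule integral_prod_list_centered_normal[OF assms(1) finite_params js])
qed

lemma integral_atom_monomial_Cons:
  assumes "0 < \<sigma>" "valid_env H p e" "\<forall>t\<in>set (t1 # ts). snd (snd t) \<in> layers sc \<nu>"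
  shows "(\<integral>w. atom_monomial e (t1 # ts) w \<partial>init_measure sc H p \<nu> \<sigma>)
    = \<sigma>\<^sup>2 * (\<Sum>r<length ts. (if atom_param e t1 = atom_param e (ts ! r) then 1 else 0)
        * (\<integral>w. atom_monomial e (remove_nth r ts) w \<partial>init_measure sc H p \<nu> \<sigma>))"
proof -
  let ?m = "\<lambda>ts. \<Prod>j\<in>params sc H p \<nu>. normal_moment \<sigma> (count (mset (map (atom_param e) ts)) j)"
  have layer: "\<forall>t\<in>set (remove_nth r ts). snd (snd t) \<in> layers sc \<nu>" for r
    using assms(3) set_remove_nth_subset by fastforce
  have t1: "atom_param e t1 \<in> params sc H p \<nu>"
    using atom_param_valid[OF assms(2)] assms(3) by (simp add: params_eq)
  have "(\<integral>w. atom_monomial e (t1 # ts) w \<partial>init_measure sc H p \<nu> \<sigma>) = ?m (t1 # ts)"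
    by (rule integral_atom_monomial[OF assms])
  also have "\<dots> = \<sigma>\<^sup>2 * (\<Sum>r<length ts. if atom_param e t1 = atom_param e (ts ! r) then ?m (remove_nth r ts) else 0)"
    using prod_normal_moment_Cons[OF assms(1) finite_params t1, of "map (atom_param e) ts", unfolded remove_nth_map]
    by simp
  also have "\<dots> = \<sigma>\<^sup>2 * (\<Sum>r<length ts. (if atom_param e t1 = atom_param e (ts ! r) then 1 else 0)
        * (\<integral>w. atom_monomial e (remove_nth r ts) w \<partial>init_measure sc H p \<nu> \<sigma>))"
    by (intro arg_cong[where f="(*) _"] sum.cong) (simp_all add: integral_atom_monomial[OF assms(1,2) layer])
  finally show ?thesis .
qed

lemma index_poly_on_valid_atom_moment:
  "\<forall>t\<in>set ts. snd (snd t) \<in> layers sc \<nu> \<Longrightarrow>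
    index_poly_on_valid (\<lambda>H p \<sigma> e. \<integral>w. atom_monomial e ts w \<partial>init_measure sc H p \<nu> \<sigma>)"
proof (induction ts rule: length_induct)
  case (1 ts)
  show ?case
  proof (cases ts)
    case Nil
    show ?thesis
      by (rule index_poly_on_valid_cong[OF index_poly_on_validI[OF index_poly.const[of 1]]])
         (simp add: integral_atom_monomial Nil normal_moment_0)
  next
    case (Cons t1 ts')
    have layer: "\<forall>t\<in>set (remove_nth r ts'). snd (snd t) \<in> layers sc \<nu>" for r
      using "1.prems" set_remove_nth_subset Cons by fastforce
    have "index_poly_on_valid (\<lambda>H p \<sigma> e. \<integral>w. atom_monomial e (remove_nth r ts') w \<partial>init_measure sc H p \<nu> \<sigma>)"
      if "r < length ts'" for r
      using "1.IH" Cons layer length_remove_nth[OF that] by simp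
    then have "index_poly_on_valid (\<lambda>H p \<sigma> e. \<sigma>\<^sup>2 * (\<Sum>r<length ts'.
        (if atom_param e t1 = atom_param e (ts' ! r) then 1 else 0)
        * (\<integral>w. atom_monomial e (remove_nth r ts') w \<partial>init_measure sc H p \<nu> \<sigma>)))"
      by (intro index_poly_on_valid_mult index_poly_on_valid_sum index_poly_on_validI[OF index_poly.variance]
          index_poly_on_validI[OF index_poly_atom_eq]) auto
    then show ?thesis
      by (rule index_poly_on_valid_cong) (use "1.prems" Cons in \<open>simp add: integral_atom_monomial_Cons\<close>)
  qed
qed

lemma integrable_weight_poly_atom_monomial:
  assumes "weight_poly (layers sc \<nu>) F" "0 < \<sigma>" "valid_env H p e" "\<forall>t\<in>set ts. snd (snd t) \<in> layers sc \<nu>"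
  shows "integrable (init_measure sc H p \<nu> \<sigma>) (\<lambda>w. F H p e w * atom_monomial e ts w)"
proof -
  have "\<forall>H p e ts. valid_env H p e \<longrightarrow> (\<forall>t\<in>set ts. snd (snd t) \<in> layers sc \<nu>) \<longrightarrow>
      integrable (init_measure sc H p \<nu> \<sigma>) (\<lambda>w. F H p e w * atom_monomial e ts w)"
    using assms(1)
  proof (induction rule: weight_poly.induct)
    case (coeff c)
    show ?case
      using integrable_atom_monomial[OF assms(2)] by auto
  next
    case (coeff_mult c F)
    then show ?case
      by (auto simp: mult.assoc)
  next
    case (weight_mult t F)
    show ?case
    proof (intro allI impI)
      fix H p :: nat and e :: env and ts :: "(nat \<times> nat \<times> nat) list"
      assume "valid_env H p e" "\<forall>t\<in>set ts. snd (snd t) \<in> layers sc \<nu>"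
      then have "integrable (init_measure sc H p \<nu> \<sigma>) (\<lambda>w. F H p e w * atom_monomial e (t # ts) w)"
        using weight_mult by simp
      then show "integrable (init_measure sc H p \<nu> \<sigma>) (\<lambda>w. w (atom_param e t) * F H p e w * atom_monomial e ts w)"
        by (simp add: atom_monomial_Cons ac_simps)
    qed
  next
    case (add F G)
    then show ?case
      by (auto simp: distrib_right)
  next
    case (sum_over_index F \<kappa>)
    show ?case
    proof (intro allI impI)
      fix H p :: nat and e :: env and ts :: "(nat \<times> nat \<times> nat) list"
      assume valid: "valid_env H p e" and layer: "\<forall>t\<in>set ts. snd (snd t) \<in> layers sc \<nu>"
      have "integrable (init_measure sc H p \<nu> \<sigma>)
          (\<lambda>w. F H p (push_env \<kappa> x e) w * atom_monomial (push_env \<kappa> x e) (map (shift_atom \<kappa>) ts) w)"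
        if "x \<in> {1..index_bound H p \<kappa>}" for x
        using sum_over_index.IH valid_env_push[OF valid that] layer by (simp add: shift_atom_def split: index_kind.split)
      then have "integrable (init_measure sc H p \<nu> \<sigma>)
          (\<lambda>w. \<Sum>x=1..index_bound H p \<kappa>. F H p (push_env \<kappa> x e) w * atom_monomial e ts w)"
        by (intro Bochner_Integration.integrable_sum) (simp add: atom_monomial_shift)
      then show "integrable (init_measure sc H p \<nu> \<sigma>)
          (\<lambda>w. (\<Sum>x=1..index_bound H p \<kappa>. F H p (push_env \<kappa> x e) w) * atom_monomial e ts w)"
        by (simp add: sum_distrib_right)
    qed
  qed
  with assms(3,4) show ?thesis by blast
qed

lemma index_poly_on_valid_expectation:
  assumes "weight_poly (layers sc \<nu>) F" "\<forall>t\<in>set ts. snd (snd t) \<in> layers sc \<nu>"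
  shows "index_poly_on_valid (\<lambda>H p \<sigma> e. \<integral>w. F H p e w * atom_monomial e ts w \<partial>init_measure sc H p \<nu> \<sigma>)"
  using assms
proof (induction arbitrary: ts rule: weight_poly.induct)
  case (coeff c)
  have "index_poly_on_valid (\<lambda>H p \<sigma> e. c H p e)"
    using coeff.hyps by (simp add: index_coeff_def index_poly_on_validI)
  then have "index_poly_on_valid (\<lambda>H p \<sigma> e. c H p e * (\<integral>w. atom_monomial e ts w \<partial>init_measure sc H p \<nu> \<sigma>))"
    using index_poly_on_valid_atom_moment[OF coeff.prems] by (rule index_poly_on_valid_mult)
  then show ?case by simp
next
  case (coeff_mult c F)
  have "index_poly_on_valid (\<lambda>H p \<sigma> e. c H p e)"
    using coeff_mult.hyps by (simp add: index_coeff_def index_poly_on_validI)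
  then have "index_poly_on_valid (\<lambda>H p \<sigma> e. c H p e * (\<integral>w. F H p e w * atom_monomial e ts w \<partial>init_measure sc H p \<nu> \<sigma>))"
    using coeff_mult.IH[OF coeff_mult.prems] by (rule index_poly_on_valid_mult)
  then show ?case by (simp add: mult.assoc)
next
  case (weight_mult t F)
  then have "index_poly_on_valid (\<lambda>H p \<sigma> e. \<integral>w. F H p e w * atom_monomial e (t # ts) w \<partial>init_measure sc H p \<nu> \<sigma>)"
    by simp
  then show ?case by (simp add: atom_monomial_Cons ac_simps)
next
  case (add F G)
  show ?case
  proof (rule index_poly_on_valid_cong[OF index_poly_on_valid_add[OF add.IH[OF add.prems]]])
    fix H p :: nat and \<sigma> :: real and e :: env
    assume "0 < \<sigma>" "valid_env H p e"
    with add.hyps add.prems show "(\<integral>w. F H p e w * atom_monomial e ts w \<partial>init_measure sc H p \<nu> \<sigma>)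
        + (\<integral>w. G H p e w * atom_monomial e ts w \<partial>init_measure sc H p \<nu> \<sigma>)
      = (\<integral>w. (F H p e w + G H p e w) * atom_monomial e ts w \<partial>init_measure sc H p \<nu> \<sigma>)"
      by (simp add: distrib_right integrable_weight_poly_atom_monomial)
  qed
next
  case (sum_over_index F \<kappa>)
  have layer: "\<forall>t\<in>set (map (shift_atom \<kappa>) ts). snd (snd t) \<in> layers sc \<nu>"
    using sum_over_index.prems by (simp add: shift_atom_def split: index_kind.split)
  show ?case
  proof (rule index_poly_on_valid_cong[OF index_poly_on_valid_sum_over_index[OF sum_over_index.IH[OF layer]]])
    fix H p :: nat and \<sigma> :: real and e :: env
    assume pos: "0 < \<sigma>" and valid: "valid_env H p e"
    have "integrable (init_measure sc H p \<nu> \<sigma>) (\<lambda>w. F H p (push_env \<kappa> x e) w * atom_monomial e ts w)"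
      if "x \<in> {1..index_bound H p \<kappa>}" for x
      using integrable_weight_poly_atom_monomial[OF sum_over_index.hyps pos valid_env_push[OF valid that] layer]
      by (simp add: atom_monomial_shift)
    then show "(\<Sum>x=1..index_bound H p \<kappa>. \<integral>w. F H p (push_env \<kappa> x e) w
          * atom_monomial (push_env \<kappa> x e) (map (shift_atom \<kappa>) ts) w \<partial>init_measure sc H p \<nu> \<sigma>)
      = (\<integral>w. (\<Sum>x=1..index_bound H p \<kappa>. F H p (push_env \<kappa> x e) w) * atom_monomial e ts w
          \<partial>init_measure sc H p \<nu> \<sigma>)"
      by (simp add: atom_monomial_shift sum_distrib_right)
  qed
qed

(* Binds the tuple (i_1, ..., i_n) as the n innermost Coord indices, i_1 innermost;
   env_tuple reads it back. *)
definition push_tuple :: "nat \<Rightarrow> (nat \<Rightarrow> nat) \<Rightarrow> env \<Rightarrow> env" where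
  "push_tuple n idx e = e(Coord := (\<lambda>i. if i < n then idx (i + 1) else e Coord (i - n)))"

definition env_tuple :: "nat \<Rightarrow> env \<Rightarrow> nat \<Rightarrow> nat" where
  "env_tuple \<nu> e = restrict (\<lambda>m. e Coord (m - 1)) {1..\<nu>}"

lemma env_tuple_push_tuple: "idx \<in> tuples \<nu> p \<Longrightarrow> env_tuple \<nu> (push_tuple \<nu> idx e) = idx"
  unfolding env_tuple_def push_tuple_def tuples_def by (auto simp: PiE_def extensional_def fun_eq_iff)

lemma sum_PiE_insert:
  assumes "x \<notin> S" "finite (PiE S T)"
  shows "(\<Sum>f\<in>PiE (insert x S) T. h f) = (\<Sum>y\<in>T x. \<Sum>g\<in>PiE S T. h (g(x := y)))"
proof -
  have "(\<Sum>f\<in>PiE (insert x S) T. h f) = (\<Sum>(y, g)\<in>T x \<times> PiE S T. h (g(x := y)))"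
    unfolding PiE_insert_eq by (subst sum.reindex[OF inj_combinator[OF assms(1)]]) (simp add: case_prod_unfold)
  also have "\<dots> = (\<Sum>y\<in>T x. \<Sum>g\<in>PiE S T. h (g(x := y)))"
    using assms(2) by (cases "T x = {}") (auto simp: sum.cartesian_product)
  finally show ?thesis .
qed

lemma weight_poly_sum_tuples:
  assumes "weight_poly Ms F"
  shows "weight_poly Ms (\<lambda>H p e w. \<Sum>idx\<in>PiE {1..n} (\<lambda>_. {1..p}). F H p (push_tuple n idx e) w)"
proof (induction n)
  case 0
  have "(\<Sum>idx\<in>PiE {1..0} (\<lambda>_. {1..p}). F H p (push_tuple 0 idx e) w) = F H p e w" for H p e w
    by (simp add: push_tuple_def)
  then show ?case
    by (intro weight_poly_cong[OF assms]) simp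
next
  case (Suc n)
  have push: "push_tuple (Suc n) (idx(Suc n := x)) e = push_tuple n idx (push_env Coord x e)" for idx x e
  proof -
    have "(if i < Suc n then (idx(Suc n := x)) (i + 1) else e Coord (i - Suc n))
        = (if i < n then idx (i + 1) else case_nat x (e Coord) (i - n))" for i
    proof (cases "n < i")
      case True
      then have "i - n = Suc (i - Suc n)" by simp
      with True show ?thesis by simp
    qed auto
    then show ?thesis by (simp add: push_tuple_def push_env_def fun_eq_iff)
  qed
  have "(\<Sum>x=1..index_bound H p Coord. \<Sum>idx\<in>PiE {1..n} (\<lambda>_. {1..p}). F H p (push_tuple n idx (push_env Coord x e)) w)
      = (\<Sum>idx\<in>PiE {1..Suc n} (\<lambda>_. {1..p}). F H p (push_tuple (Suc n) idx e) w)"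
    for H p e w
  proof -
    have "{1..Suc n} = insert (Suc n) {1..n}" by auto
    then have "(\<Sum>idx\<in>PiE {1..Suc n} (\<lambda>_. {1..p}). F H p (push_tuple (Suc n) idx e) w)
        = (\<Sum>x=1..p. \<Sum>idx\<in>PiE {1..n} (\<lambda>_. {1..p}). F H p (push_tuple (Suc n) (idx(Suc n := x)) e) w)"
      by (simp add: sum_PiE_insert finite_PiE)
    also have "\<dots> = (\<Sum>x=1..p. \<Sum>idx\<in>PiE {1..n} (\<lambda>_. {1..p}). F H p (push_tuple n idx (push_env Coord x e)) w)"
      by (intro sum.cong refl) (simp add: push)
    finally show ?thesis by (simp add: index_bound_def)
  qed
  then show ?case
    by (intro weight_poly_cong[OF weight_poly.sum_over_index[OF Suc.IH, of Coord]])
qed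

lemma index_poly_target_val:
  assumes "fvar_ok \<nu> v"
  shows "index_poly (\<lambda>H p \<sigma> e. target_val H p (env_tuple \<nu> e) v)"
proof (cases v)
  case VarH
  then show ?thesis by (simp add: target_val_def index_poly.rank_bound)
next
  case Varp
  then show ?thesis by (simp add: target_val_def index_poly.coord_bound)
next
  case (Vari m)
  with assms have eq: "(\<lambda>H p \<sigma> e. target_val H p (env_tuple \<nu> e) v) = (\<lambda>H p \<sigma> e. real (e Coord (m - 1)))"
    by (simp add: fvar_ok_def target_val_def env_tuple_def)
  show ?thesis unfolding eq by (rule index_poly.index_value)
next
  case (Vdelta a b)
  with assms have eq: "(\<lambda>H p \<sigma> e. target_val H p (env_tuple \<nu> e) v)
      = (\<lambda>H p \<sigma> e. if e Coord (a - 1) = e Coord (b - 1) then 1 else 0)"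
    by (simp add: fvar_ok_def target_val_def env_tuple_def)
  show ?thesis unfolding eq by (rule index_poly.index_eq)
qed

lemma index_coeff_target:
  assumes "\<forall>m\<in>Poly_Mapping.keys Q. \<forall>v\<in>Poly_Mapping.keys m. fvar_ok \<nu> v"
  shows "index_coeff (\<lambda>H p e. target Q H p (env_tuple \<nu> e))"
  unfolding index_coeff_def target_def poly_eval_def mono_eval_def
  using assms
  by (intro index_poly_sum index_poly.mult index_poly.const index_poly_prod index_poly_power index_poly_target_val)
     auto

definition layer :: "scenario \<Rightarrow> nat \<Rightarrow> nat" where
  "layer sc m = (case sc of ASYM \<Rightarrow> m | SYM \<Rightarrow> 1)"

lemma weight_poly_model: "weight_poly (layers sc \<nu>) (\<lambda>H p e w. model sc H \<nu> w (env_tuple \<nu> e))"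
proof -
  have "weight_poly (layers sc \<nu>) (\<lambda>H p e w. \<Prod>m\<in>{1..\<nu>}. w (atom_param e (0, m - 1, layer sc m)))"
    by (intro weight_poly_prod weight_poly_weight) (cases sc; simp add: layer_def layers_def)
  from weight_poly.sum_over_index[OF this, of Rank] show ?thesis
    by (rule weight_poly_cong)
       (simp add: model_def weight_def env_tuple_def atom_param_def push_env_def index_bound_def layer_def)
qed

lemma weight_poly_loss:
  assumes "\<forall>m\<in>Poly_Mapping.keys Q. \<forall>v\<in>Poly_Mapping.keys m. fvar_ok \<nu> v"
  shows "weight_poly (layers sc \<nu>) (\<lambda>H p e w. loss sc H p \<nu> Q w)"
proof -
  let ?r = "\<lambda>H p e w. model sc H \<nu> w (env_tuple \<nu> e) + target Q H p (env_tuple \<nu> e) * (- 1)"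
  have "weight_poly (layers sc \<nu>) ?r"
    by (intro weight_poly.add weight_poly_model weight_poly.coeff_mult index_coeff_target assms weight_poly_const)
  then have "weight_poly (layers sc \<nu>) (\<lambda>H p e w. 1 / 2 * (\<Sum>idx\<in>PiE {1..\<nu>} (\<lambda>_. {1..p}).
      ?r H p (push_tuple \<nu> idx e) w * ?r H p (push_tuple \<nu> idx e) w))"
    by (intro weight_poly_scale weight_poly_sum_tuples weight_poly_mult)
  then show ?thesis
    by (rule weight_poly_cong)
       (simp add: loss_def tuples_def env_tuple_push_tuple[unfolded tuples_def] power2_eq_square cong: sum.cong)
qed

definition loss_flow_on :: "scenario \<Rightarrow> nat \<Rightarrow> nat \<Rightarrow> nat \<Rightarrow> ((fvar \<Rightarrow>\<^sub>0 nat) \<Rightarrow>\<^sub>0 real) \<Rightarrow> real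
    \<Rightarrow> (real \<Rightarrow> weights) \<Rightarrow> real \<Rightarrow> bool" where
  "loss_flow_on sc H p \<nu> Q T \<psi> \<epsilon> \<longleftrightarrow> (\<forall>t\<in>{-\<epsilon><..<\<epsilon>}. \<forall>j\<in>params sc H p \<nu>.
     ((\<lambda>\<tau>. \<psi> \<tau> j) has_real_derivative - (1 / T) * partial (loss sc H p \<nu> Q) (\<psi> t) j) (at t))"

lemma deriv_weight_poly_along_loss_flow:
  assumes E: "weight_poly (layers sc \<nu>) E"
    and flow: "loss_flow_on sc H p \<nu> Q T \<psi> \<epsilon>" and valid: "valid_env H p e"
    and f: "\<And>\<tau>. \<tau> \<in> {-\<epsilon><..<\<epsilon>} \<Longrightarrow> f \<tau> = E H p e (\<psi> \<tau>) / c"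
    and t: "t \<in> {-\<epsilon><..<\<epsilon>}"
  shows "deriv f t = - (\<Sum>j\<in>{1..H} \<times> {1..p} \<times> layers sc \<nu>.
            partial (E H p e) (\<psi> t) j * partial (loss sc H p \<nu> Q) (\<psi> t) j) / (T * c)"
proof -
  let ?S = "{1..H} \<times> {1..p} \<times> layers sc \<nu>"
  let ?D = "\<Sum>j\<in>?S. partial (E H p e) (\<psi> t) j * (- (1 / T) * partial (loss sc H p \<nu> Q) (\<psi> t) j)"
  have "((\<lambda>\<tau>. E H p e (\<psi> \<tau>)) has_real_derivative ?D) (at t)"
    using flow t by (intro weight_poly_chain_rule[OF E finite_layers valid]) (auto simp: loss_flow_on_def params_eq)
  then have "((\<lambda>\<tau>. E H p e (\<psi> \<tau>) / c) has_real_derivative ?D / c) (at t)"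
    by (rule DERIV_cdivide)
  then have "(f has_real_derivative ?D / c) (at t)"
    by (rule has_field_derivative_transform_within_open[OF _ open_greaterThanLessThan t]) (simp add: f)
  then have "deriv f t = ?D / c"
    by (rule DERIV_imp_deriv)
  also have "?D = - (\<Sum>j\<in>?S. partial (E H p e) (\<psi> t) j * partial (loss sc H p \<nu> Q) (\<psi> t) j) / T"
    by (simp add: sum_negf sum_divide_distrib)
  finally show ?thesis
    by simp
qed

lemma higher_deriv_loss_along_flow:
  assumes "\<forall>m\<in>Poly_Mapping.keys Q. \<forall>v\<in>Poly_Mapping.keys m. fvar_ok \<nu> v"
  obtains E where "weight_poly (layers sc \<nu>) E"
    "\<And>H p T \<psi> \<epsilon> t e. loss_flow_on sc H p \<nu> Q T \<psi> \<epsilon> \<Longrightarrow> t \<in> {-\<epsilon><..<\<epsilon>} \<Longrightarrow> valid_env H p e \<Longrightarrow>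
       (deriv ^^ k) (\<lambda>t. loss sc H p \<nu> Q (\<psi> t)) t = E H p e (\<psi> t) / T ^ k"
proof -
  have "\<exists>E. weight_poly (layers sc \<nu>) E \<and> (\<forall>H p T \<psi> \<epsilon> t e. loss_flow_on sc H p \<nu> Q T \<psi> \<epsilon> \<longrightarrow>
      t \<in> {-\<epsilon><..<\<epsilon>} \<longrightarrow> valid_env H p e \<longrightarrow>
      (deriv ^^ k) (\<lambda>t. loss sc H p \<nu> Q (\<psi> t)) t = E H p e (\<psi> t) / T ^ k)"
  proof (induction k)
    case 0
    show ?case
      using weight_poly_loss[OF assms] by (intro exI[of _ "\<lambda>H p e. loss sc H p \<nu> Q"]) simp
  next
    case (Suc k)
    then obtain E where E: "weight_poly (layers sc \<nu>) E"
      and E_deriv: "\<And>H p T \<psi> \<epsilon> t e. loss_flow_on sc H p \<nu> Q T \<psi> \<epsilon> \<Longrightarrow> t \<in> {-\<epsilon><..<\<epsilon>} \<Longrightarrow>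
        valid_env H p e \<Longrightarrow> (deriv ^^ k) (\<lambda>t. loss sc H p \<nu> Q (\<psi> t)) t = E H p e (\<psi> t) / T ^ k"
      by blast
    define E' where "E' H p e w = - (\<Sum>j\<in>{1..H} \<times> {1..p} \<times> layers sc \<nu>.
        partial (E H p e) w j * partial (loss sc H p \<nu> Q) w j)" for H p e w
    have "weight_poly (layers sc \<nu>) E'"
      using weight_poly_scale[OF weight_poly_gradient_inner[OF E weight_poly_loss[OF assms] finite_layers], of "- 1"]
      unfolding E'_def by simp
    moreover have "(deriv ^^ Suc k) (\<lambda>t. loss sc H p \<nu> Q (\<psi> t)) t = E' H p e (\<psi> t) / T ^ Suc k"
      if flow: "loss_flow_on sc H p \<nu> Q T \<psi> \<epsilon>" and t: "t \<in> {-\<epsilon><..<\<epsilon>}" and valid: "valid_env H p e"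
      for H p T \<psi> \<epsilon> t e
    proof -
      have f: "(deriv ^^ k) (\<lambda>t. loss sc H p \<nu> Q (\<psi> t)) \<tau> = E H p e (\<psi> \<tau>) / T ^ k"
        if "\<tau> \<in> {-\<epsilon><..<\<epsilon>}" for \<tau>
        using E_deriv[OF flow that valid] .
      show ?thesis
        using deriv_weight_poly_along_loss_flow[OF E flow valid, OF f t] by (simp add: E'_def)
    qed
    ultimately show ?case by blast
  qed
  with that show ?thesis by blast
qed

lemma expectation_weight_poly:
  assumes "weight_poly (layers sc \<nu>) E"
  obtains P where "\<And>H p \<sigma>. H \<ge> 1 \<Longrightarrow> p \<ge> 1 \<Longrightarrow> \<sigma> > 0 \<Longrightarrow>
    integrable (init_measure sc H p \<nu> \<sigma>) (E H p (\<lambda>_ _. 1)) \<and>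
    (\<integral>w. E H p (\<lambda>_ _. 1) w \<partial>init_measure sc H p \<nu> \<sigma>) = poly_eval (pvar_val H p \<sigma>) P"
proof -
  obtain g where g: "index_poly g"
    and g_eq: "\<And>H p \<sigma> e. 0 < \<sigma> \<Longrightarrow> valid_env H p e \<Longrightarrow> (\<integral>w. E H p e w \<partial>init_measure sc H p \<nu> \<sigma>) = g H p \<sigma> e"
    using index_poly_on_valid_expectation[OF assms, of "[]"] unfolding index_poly_on_valid_def atom_monomial_def by auto
  obtain P where P: "\<And>H p \<sigma>. g H p \<sigma> (\<lambda>_ _. 1) = poly_eval (pvar_val H p \<sigma>) P"
    using pvar_polynomial_if_index_poly[OF g] unfolding pvar_polynomial_def by blast
  have "integrable (init_measure sc H p \<nu> \<sigma>) (E H p (\<lambda>_ _. 1)) \<and>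
    (\<integral>w. E H p (\<lambda>_ _. 1) w \<partial>init_measure sc H p \<nu> \<sigma>) = poly_eval (pvar_val H p \<sigma>) P"
    if "H \<ge> 1" "p \<ge> 1" "\<sigma> > 0" for H p \<sigma>
  proof -
    have valid: "valid_env H p (\<lambda>_ _. 1)"
      using that by (simp add: valid_env_def index_bound_def split: index_kind.split)
    show ?thesis
      using integrable_weight_poly_atom_monomial[OF assms that(3) valid, of "[]"] g_eq[OF that(3) valid] P
      by (simp add: atom_monomial_def)
  qed
  with that show ?thesis by blast
qed

theorem theorem1:
  fixes \<nu> s :: nat and sc :: scenario and Q :: "(fvar \<Rightarrow>\<^sub>0 nat) \<Rightarrow>\<^sub>0 real"
  assumes "\<nu> \<ge> 2"
    and "\<forall>m\<in>Poly_Mapping.keys Q. \<forall>v\<in>Poly_Mapping.keys m. fvar_ok \<nu> v"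
  shows "\<exists>P :: (pvar \<Rightarrow>\<^sub>0 nat) \<Rightarrow>\<^sub>0 real.
           \<forall>(H::nat) (p::nat) (\<sigma>::real) (T::real) \<phi>.
             H \<ge> 1 \<longrightarrow> p \<ge> 1 \<longrightarrow> \<sigma> > 0 \<longrightarrow> T > 0 \<longrightarrow>
             (sc = SYM \<longrightarrow> sym_tensor \<nu> p (target Q H p)) \<longrightarrow>
             gradient_flow sc H p \<nu> Q T \<phi> \<longrightarrow>
             integrable (init_measure sc H p \<nu> \<sigma>)
               (\<lambda>w. (deriv ^^ s) (\<lambda>t. loss sc H p \<nu> Q (\<phi> w t)) 0) \<and>
             T ^ s * integral\<^sup>L (init_measure sc H p \<nu> \<sigma>)
               (\<lambda>w. (deriv ^^ s) (\<lambda>t. loss sc H p \<nu> Q (\<phi> w t)) 0)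
             = poly_eval (pvar_val H p \<sigma>) P"
proof -
  obtain E where E: "weight_poly (layers sc \<nu>) E"
    and E_deriv: "\<And>H p T \<psi> \<epsilon> t e. loss_flow_on sc H p \<nu> Q T \<psi> \<epsilon> \<Longrightarrow> t \<in> {-\<epsilon><..<\<epsilon>} \<Longrightarrow>
      valid_env H p e \<Longrightarrow> (deriv ^^ s) (\<lambda>t. loss sc H p \<nu> Q (\<psi> t)) t = E H p e (\<psi> t) / T ^ s"
    using higher_deriv_loss_along_flow[OF assms(2)] by blast
  obtain P where P: "\<And>H p \<sigma>. H \<ge> 1 \<Longrightarrow> p \<ge> 1 \<Longrightarrow> \<sigma> > 0 \<Longrightarrow>
      integrable (init_measure sc H p \<nu> \<sigma>) (E H p (\<lambda>_ _. 1)) \<and>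
      (\<integral>w. E H p (\<lambda>_ _. 1) w \<partial>init_measure sc H p \<nu> \<sigma>) = poly_eval (pvar_val H p \<sigma>) P"
    using expectation_weight_poly[OF E] by blast
  show ?thesis
  proof (intro exI[of _ P] allI impI)
    fix H p :: nat and \<sigma> T :: real and \<phi>
    assume H: "H \<ge> 1" and p: "p \<ge> 1" and \<sigma>: "\<sigma> > 0" and T: "T > 0"
      and flow: "gradient_flow sc H p \<nu> Q T \<phi>"
    have valid: "valid_env H p (\<lambda>_ _. 1)"
      using H p by (simp add: valid_env_def index_bound_def split: index_kind.split)
    have "(deriv ^^ s) (\<lambda>t. loss sc H p \<nu> Q (\<phi> w t)) 0 = E H p (\<lambda>_ _. 1) w / T ^ s" for w
    proof -
      obtain \<epsilon> where "0 < \<epsilon>" "loss_flow_on sc H p \<nu> Q T (\<phi> w) \<epsilon>" "\<phi> w 0 = w"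
        using flow unfolding gradient_flow_def loss_flow_on_def by blast
      then show ?thesis using E_deriv[OF _ _ valid] by simp
    qed
    then show "integrable (init_measure sc H p \<nu> \<sigma>) (\<lambda>w. (deriv ^^ s) (\<lambda>t. loss sc H p \<nu> Q (\<phi> w t)) 0) \<and>
        T ^ s * integral\<^sup>L (init_measure sc H p \<nu> \<sigma>) (\<lambda>w. (deriv ^^ s) (\<lambda>t. loss sc H p \<nu> Q (\<phi> w t)) 0)
          = poly_eval (pvar_val H p \<sigma>) P"
      using P[OF H p \<sigma>] T by simp
  qed
qed

end
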